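(* Let $r\ge 3$ and $s$ be coprime odd integers with $0<s<r$, $q=\exp(i\pi s/r)$. Define $P_n\in\mathbb{Z}[X]$ by $P_0=1$, $P_1=X$, $P_{n+1}=XP_n+\epsilon_n\epsilon_{n+1}P_{n-1}$ for $1\le n\le r-2$; then $P_{r-2},P_{r-1}$ are coprime monic of degrees $r-2,r-1$ and $$\frac{P_{r-1}}{P_{r-2}}=X+\cfrac{\epsilon_1\epsilon_2}{X+\cfrac{\epsilon_2\epsilon_3}{X+\cfrac{\cdots}{\cdots+\cfrac{\epsilon_{r-2}\epsilon_{r-1}}{X}}}}.$$ Moreover: (i) the map $X\mapsto e_1$ induces an algebra isomorphism $\mathbb{Q}[X]/(P_{r-1})\cong V_q$; (ii) for every $f\in\mathbb{Q}[X]$, $$\epsilon(f(e_1))=\sum_{z\in\mathbb{C},\,P_{r-1}(z)=0}\operatorname{Res}_{z}\left(\frac{f\,P_{r-2}}{P_{r-1}}\right);$$ (iii) $P_{r-1}(X)=R(X^2)$, where $R$ is the Riley polynomial.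
   Context: For an integer $n$ put $[n]=\frac{q^n-q^{-n}}{q-q^{-1}}$, $[n]!=[n][n-1]\cdots[1]$, and for $1\le n\le r-1$ let $\epsilon_n=\operatorname{sign}[n]=(-1)^{\lfloor ns/r\rfloor}$ (so $\epsilon_1=1$ and $\epsilon_n=\epsilon_{r-n}$). A triple $(i,j,k)\in\{0,\dots,r-2\}^3$ is $r$-admissible if $i\le j+k$, $j\le i+k$, $k\le i+j$, $i+j+k$ is even and $i+j+k\le 2r-4$; for such a triple write $i=b+c$, $j=a+c$, $k=a+b$ and set $\langle i,j,k\rangle=(-1)^{a+b+c}\frac{[a+b+c+1]![a]![b]![c]!}{[a+b]![a+c]![b+c]!}$ (a nonzero real number). Let $V_q$ be the $\mathbb{Q}$-vector space with basis $e_0,\dots,e_{r-2}$, with the symmetric bilinear form $\eta$ for which this basis is orthogonal and $\eta(e_i,e_i)=(-1)^i\epsilon_{i+1}$, and the symmetric trilinear form $\omega$ with $\omega(e_i,e_j,e_k)=\operatorname{sign}\langle i,j,k\rangle$ if $(i,j,k)$ is $r$-admissible and $0$ otherwise. The product on $V_q$ is defined by $\eta(x\cdot y,z)=\omega(x,y,z)$; this makes $V_q$ a commutative associative unital $\mathbb{Q}$-algebra with unit $e_0$ and a Frobenius algebra with counit $\epsilon(f)=\eta(f,e_0)$ (so $\eta(x,y)=\epsilon(xy)$). The Riley polynomial $R(t)\in\mathbb{Z}[t]$ is the upper-left entry of the matrix product $A_1A_2\cdots A_{r-1}$, where $A_k=\begin{pmatrix}1&1\\0&1\end{pmatrix}^{\epsilon_k}$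 for $k$ odd and $A_k=\begin{pmatrix}1&0\\t&1\end{pmatrix}^{\epsilon_k}$ for $k$ even. *)

theory Defs
  imports "HOL-Complex_Analysis.Complex_Analysis"
    "HOL-Computational_Algebra.Fraction_Field"
begin

definition qroot :: "nat \<Rightarrow> nat \<Rightarrow> complex" where
  "qroot r s = exp (\<i> * complex_of_real (pi * real s / real r))"

definition qint :: "nat \<Rightarrow> nat \<Rightarrow> nat \<Rightarrow> complex" where
  "qint r s n = (let q = qroot r s in (q ^ n - inverse q ^ n) / (q - inverse q))"

definition qfact :: "nat \<Rightarrow> nat \<Rightarrow> nat \<Rightarrow> complex" where
  "qfact r s n = (\<Prod>k\<in>{1..n}. qint r s k)"

text \<open>epsilon_n = sign [n] ([n] is a real number).\<close>
definition eps :: "nat \<Rightarrow> nat \<Rightarrow> nat \<Rightarrow> int" where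
  "eps r s n = (if Re (qint r s n) > 0 then 1 else if Re (qint r s n) < 0 then -1 else 0)"

definition admissible :: "nat \<Rightarrow> nat \<Rightarrow> nat \<Rightarrow> nat \<Rightarrow> bool" where
  "admissible r i j k \<longleftrightarrow> i \<le> r - 2 \<and> j \<le> r - 2 \<and> k \<le> r - 2 \<and>
     i \<le> j + k \<and> j \<le> i + k \<and> k \<le> i + j \<and> even (i + j + k) \<and> i + j + k \<le> 2 * r - 4"

text \<open>i = b+c, j = a+c, k = a+b.\<close>
definition theta :: "nat \<Rightarrow> nat \<Rightarrow> nat \<Rightarrow> nat \<Rightarrow> nat \<Rightarrow> complex" where
  "theta r s i j k =
     (let a = (j + k - i) div 2; b = (i + k - j) div 2; c = (i + j - k) div 2 in
      (-1) ^ (a + b + c) * qfact r s (a + b + c + 1) * qfact r s a * qfact r s b * qfact r s c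
        / (qfact r s (a + b) * qfact r s (a + c) * qfact r s (b + c)))"

definition omega :: "nat \<Rightarrow> nat \<Rightarrow> nat \<Rightarrow> nat \<Rightarrow> nat \<Rightarrow> rat" where
  "omega r s i j k = (if admissible r i j k then (if Re (theta r s i j k) > 0 then 1 else if Re (theta r s i j k) < 0 then -1 else 0) else 0)"

definition etad :: "nat \<Rightarrow> nat \<Rightarrow> nat \<Rightarrow> rat" where
  "etad r s i = (-1) ^ i * of_int (eps r s (i + 1))"

text \<open>Elements of V_q: coefficient functions supported on {0..r-2} (basis e_0..e_{r-2}).\<close>
definition Vq :: "nat \<Rightarrow> (nat \<Rightarrow> rat) set" where
  "Vq r = {x. \<forall>k. r - 2 < k \<longrightarrow> x k = 0}"

definition ebas :: "nat \<Rightarrow> nat \<Rightarrow> rat" where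
  "ebas i = (\<lambda>k. if k = i then 1 else 0)"

definition eta :: "nat \<Rightarrow> nat \<Rightarrow> (nat \<Rightarrow> rat) \<Rightarrow> (nat \<Rightarrow> rat) \<Rightarrow> rat" where
  "eta r s x y = (\<Sum>i\<le>r - 2. x i * y i * etad r s i)"

definition omega3 :: "nat \<Rightarrow> nat \<Rightarrow> (nat \<Rightarrow> rat) \<Rightarrow> (nat \<Rightarrow> rat) \<Rightarrow> (nat \<Rightarrow> rat) \<Rightarrow> rat" where
  "omega3 r s x y z = (\<Sum>i\<le>r - 2. \<Sum>j\<le>r - 2. \<Sum>k\<le>r - 2. x i * y j * z k * omega r s i j k)"

text \<open>Product determined by eta(x*y, e_k) = omega(x,y,e_k), eta being diagonal.\<close>
definition vmult :: "nat \<Rightarrow> nat \<Rightarrow> (nat \<Rightarrow> rat) \<Rightarrow> (nat \<Rightarrow> rat) \<Rightarrow> nat \<Rightarrow> rat" where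
  "vmult r s x y = (\<lambda>k. if k \<le> r - 2 then omega3 r s x y (ebas k) / etad r s k else 0)"

definition counit :: "nat \<Rightarrow> nat \<Rightarrow> (nat \<Rightarrow> rat) \<Rightarrow> rat" where
  "counit r s x = eta r s x (ebas 0)"

fun vpow :: "nat \<Rightarrow> nat \<Rightarrow> (nat \<Rightarrow> rat) \<Rightarrow> nat \<Rightarrow> nat \<Rightarrow> rat" where
  "vpow r s x 0 = ebas 0"
| "vpow r s x (Suc n) = vmult r s x (vpow r s x n)"

definition veval :: "nat \<Rightarrow> nat \<Rightarrow> rat poly \<Rightarrow> nat \<Rightarrow> rat" where
  "veval r s f = (\<lambda>k. \<Sum>i\<le>degree f. coeff f i * vpow r s (ebas 1) i k)"

fun Ppoly :: "nat \<Rightarrow> nat \<Rightarrow> nat \<Rightarrow> int poly" where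
  "Ppoly r s 0 = 1"
| "Ppoly r s (Suc 0) = [:0, 1:]"
| "Ppoly r s (Suc (Suc n)) =
     [:0, 1:] * Ppoly r s (Suc n) + smult (eps r s (Suc n) * eps r s (Suc (Suc n))) (Ppoly r s n)"

text \<open>Continued fraction: cf m is the tail starting at level r-1-m, i.e.
  cf 0 = X (level r-1), cf (m+1) = X + eps_j eps_{j+1} / cf m with j = r-2-m.
  The full continued fraction is cf (r-2).\<close>
fun cfrac :: "nat \<Rightarrow> nat \<Rightarrow> nat \<Rightarrow> int poly fract" where
  "cfrac r s 0 = Fract [:0, 1:] 1"
| "cfrac r s (Suc m) = Fract [:0, 1:] 1 +
     of_int (eps r s (r - 2 - m) * eps r s (r - 1 - m)) / cfrac r s m"

type_synonym mat2 = "int poly \<times> int poly \<times> int poly \<times> int poly"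
  (* (a,b,c,d) represents the matrix [[a,b],[c,d]] *)

fun mmul2 :: "mat2 \<Rightarrow> mat2 \<Rightarrow> mat2" where
  "mmul2 (a, b, c, d) (e, f, g, h) = (a*e + b*g, a*f + b*h, c*e + d*g, c*f + d*h)"

text \<open>[[1,1],[0,1]]^m = [[1,m],[0,1]] and [[1,0],[t,1]]^m = [[1,0],[m t,1]] for m = eps_k = +-1.\<close>
definition rileyA :: "nat \<Rightarrow> nat \<Rightarrow> nat \<Rightarrow> mat2" where
  "rileyA r s k = (if odd k then (1, [:of_int (eps r s k):], 0, 1)
                   else (1, 0, [:0, of_int (eps r s k):], 1))"

fun rileyProd :: "nat \<Rightarrow> nat \<Rightarrow> nat \<Rightarrow> mat2" where
  "rileyProd r s 0 = (1, 0, 0, 1)"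
| "rileyProd r s (Suc n) = mmul2 (rileyProd r s n) (rileyA r s (Suc n))"

definition riley :: "nat \<Rightarrow> nat \<Rightarrow> int poly" where
  "riley r s = fst (rileyProd r s (r - 1))"

end

theory Submission
  imports Defs
begin

(* The structure constants <i,j,k>/eta(e_k,e_k) of V_q are signs, with exponents read off from the
   signs eps_n of the quantum integers. Multiplication by e_1 is then the three-term recurrence
   e_1 e_j = e_(j+1) - eps_j eps_(j+1) e_(j-1), the recurrence of the P_n, so that P_n(e_1) = e_n
   for n <= r-2 and P_(r-1)(e_1) = 0. The identity x (e_1 y) = e_1 (x y) reduces, coefficientwise,
   to a four-term identity between signs; its only nontrivial case is settled by Ptolemy's identity
   [x+y][x+z] = [x][x+y+z] + [y][z]. Hence f |-> f(e_1) is a surjective algebra homomorphism with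
   kernel (P_(r-1)). The counit takes the e_0-coefficient, which is the top coefficient of
   f P_(r-2) mod P_(r-1); by the residue theorem on a large circle this is the sum of the residues
   of f P_(r-2) / P_(r-1). Finally, after t = X^2 the first row of the Riley product obeys the same
   recurrence up to the sign eps_1 ... eps_n, which is 1 for n = r-1 by the symmetry
   eps_n = eps_(r-n). *)

lemma neg_one_power_eq_iff: "((-1::'a::linordered_idom) ^ m = (-1) ^ n) \<longleftrightarrow> even (m + n)"
  by (cases "even m"; cases "even n") auto

lemma neg_one_power_eq_minus: "odd (m + n) \<Longrightarrow> (-1::'a::linordered_idom) ^ m = - ((-1) ^ n)"
  by (cases "even m") auto

lemma neg_one_power_add_eq:
  "even (a + b + c + d) \<Longrightarrow> odd (a + b) \<or> even (a + c) \<Longrightarrow>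
     (-1::'a::linordered_idom) ^ a + (-1) ^ b = (-1) ^ c + (-1) ^ d"
  by (cases "even a"; cases "even b"; cases "even c"; cases "even d") auto

lemma sgn_add_eq:
  fixes a b :: "'a::linordered_idom"
  shows "a \<noteq> 0 \<Longrightarrow> sgn a = sgn b \<Longrightarrow> sgn (a + b) = sgn a"
  by (cases "a > 0") (auto simp: sgn_if split: if_splits)

lemma sum_mult_sum_swap:
  fixes a :: "'a::comm_semiring_0"
  shows "(\<Sum>j\<in>J. a * (\<Sum>l\<in>K. b l * A l j) * B j) = (\<Sum>l\<in>K. a * b l * (\<Sum>j\<in>J. A l j * B j))"
proof -
  have "(\<Sum>j\<in>J. a * (\<Sum>l\<in>K. b l * A l j) * B j) = (\<Sum>j\<in>J. \<Sum>l\<in>K. a * b l * (A l j * B j))"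
    by (simp add: sum_distrib_left sum_distrib_right mult_ac)
  also have "\<dots> = (\<Sum>l\<in>K. \<Sum>j\<in>J. a * b l * (A l j * B j))" by (rule sum.swap)
  finally show ?thesis by (simp add: sum_distrib_left)
qed

lemma sum_sum_mult_sum_swap:
  fixes a :: "'i \<Rightarrow> 'a::comm_semiring_0"
  shows "(\<Sum>i\<in>I. \<Sum>l\<in>K. a i * b l * (\<Sum>k\<in>J. C i l k * D k))
    = (\<Sum>k\<in>J. (\<Sum>i\<in>I. \<Sum>l\<in>K. a i * b l * C i l k) * D k)"
proof -
  have "(\<Sum>i\<in>I. \<Sum>l\<in>K. a i * b l * (\<Sum>k\<in>J. C i l k * D k))
      = (\<Sum>i\<in>I. \<Sum>k\<in>J. \<Sum>l\<in>K. a i * b l * C i l k * D k)"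
    by (rule sum.cong[OF refl]) (simp add: sum_distrib_left mult_ac sum.swap[of _ K])
  also have "\<dots> = (\<Sum>k\<in>J. \<Sum>i\<in>I. \<Sum>l\<in>K. a i * b l * C i l k * D k)" by (rule sum.swap)
  finally show ?thesis by (simp add: sum_distrib_right)
qed

lemma map_poly_hom_add:
  assumes "f 0 = 0" "\<And>x y. f (x + y) = f x + f y"
  shows "map_poly f (p + q) = map_poly f p + map_poly f q"
  by (intro poly_eqI) (simp add: coeff_map_poly assms)

lemma map_poly_hom_mult:
  fixes f :: "'a::comm_semiring_1 \<Rightarrow> 'b::comm_semiring_1"
  assumes "f 0 = 0" "\<And>x y. f (x + y) = f x + f y" "\<And>x y. f (x * y) = f x * f y"
  shows "map_poly f (p * q) = map_poly f p * map_poly f q"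
proof (induction p)
  case (pCons a p)
  have "pCons a p * q = smult a q + pCons 0 (p * q)" by simp
  then show ?case
    using pCons assms by (simp add: map_poly_hom_add map_poly_smult map_poly_pCons)
qed simp

lemmas map_poly_of_int_add = map_poly_hom_add[of "of_int :: int \<Rightarrow> 'a::ring_1", OF of_int_0 of_int_add]

lemmas map_poly_of_int_mult =
  map_poly_hom_mult[of "of_int :: int \<Rightarrow> 'a::comm_ring_1", OF of_int_0 of_int_add of_int_mult]

lemmas map_poly_of_rat_add =
  map_poly_hom_add[of "of_rat :: rat \<Rightarrow> 'a::field_char_0", OF of_rat_0 of_rat_add]

lemmas map_poly_of_rat_mult =
  map_poly_hom_mult[of "of_rat :: rat \<Rightarrow> 'a::field_char_0", OF of_rat_0 of_rat_add of_rat_mult]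

lemma of_int_fract: "(of_int k :: 'a::idom fract) = Fract (of_int k) 1"
  by (cases k rule: int_cases) (simp_all add: of_nat_fract One_fract_def)

lemma map_poly_of_rat_of_int:
  "map_poly (of_rat :: rat \<Rightarrow> 'a::field_char_0) (map_poly of_int p) = map_poly of_int p"
  by (subst map_poly_map_poly) (simp_all add: comp_def)

section \<open>Residues of a quotient of polynomials\<close>

lemma norm_poly_le_sum_coeff:
  fixes p :: "'a::real_normed_field poly"
  assumes "degree p \<le> m" "1 \<le> norm z"
  shows "norm (poly p z) \<le> (\<Sum>i\<le>m. norm (coeff p i)) * norm z ^ m"
proof -
  have "poly p z = (\<Sum>i\<le>m. coeff p i * z ^ i)"
    unfolding poly_altdef by (rule sum.mono_neutral_left) (use assms in \<open>auto simp: coeff_eq_0\<close>)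
  then have "norm (poly p z) \<le> (\<Sum>i\<le>m. norm (coeff p i) * norm z ^ i)"
    by (simp add: norm_mult norm_power sum_norm_le)
  also have "\<dots> \<le> (\<Sum>i\<le>m. norm (coeff p i) * norm z ^ m)"
    by (intro sum_mono mult_left_mono power_increasing) (use assms in auto)
  finally show ?thesis by (simp add: sum_distrib_right)
qed

lemma monic_poly_norm_ge:
  fixes P :: "'a::real_normed_field poly"
  assumes "lead_coeff P = 1" "degree P = n" "n \<ge> 1"
  obtains R0 where "R0 \<ge> 1" "\<And>z. R0 \<le> norm z \<Longrightarrow> norm z ^ n / 2 \<le> norm (poly P z)"
proof
  define P' where "P' = P - monom 1 n"
  define B where "B = (\<Sum>i\<le>n - 1. norm (coeff P' i))"
  have "degree P' \<le> n - 1"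
    by (rule degree_le) (use assms in \<open>auto simp: P'_def coeff_eq_0 coeff_monom\<close>)
  then have P'_le: "norm (poly P' z) \<le> B * norm z ^ (n - 1)" if "1 \<le> norm z" for z
    unfolding B_def using norm_poly_le_sum_coeff that by blast
  show "2 * max 1 B + 1 \<ge> 1" by simp
  fix z :: 'a assume z: "2 * max 1 B + 1 \<le> norm z"
  have "norm z * norm z ^ (n - 1) = norm z ^ n"
    using assms(3) by (metis power_Suc Suc_diff_1 less_le_trans zero_less_one)
  moreover have "2 * B * norm z ^ (n - 1) \<le> norm z * norm z ^ (n - 1)"
    using z by (intro mult_right_mono) auto
  moreover have "norm (poly P' z) \<le> B * norm z ^ (n - 1)" using P'_le z by simp
  ultimately have "norm (poly P' z) \<le> norm z ^ n / 2" by simp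
  moreover have "norm (z ^ n) \<le> norm (poly P z) + norm (poly P' z)"
    using norm_triangle_ineq4[of "poly P z" "poly P' z"] by (simp add: P'_def poly_monom)
  ultimately show "norm z ^ n / 2 \<le> norm (poly P z)" by (simp add: norm_power)
qed

lemma contour_integral_circlepath_poly_quotient:
  fixes N P :: "complex poly"
  assumes "P \<noteq> 0" "R > 0" and roots: "\<And>z. poly P z = 0 \<Longrightarrow> norm z < R"
  shows "contour_integral (circlepath 0 R) (\<lambda>w. poly N w / poly P w)
    = 2 * pi * \<i> * (\<Sum>z\<in>{z. poly P z = 0}. residue (\<lambda>w. poly N w / poly P w) z)"
proof -
  define S where "S = {z. poly P z = 0}"
  have "finite S" unfolding S_def using poly_roots_finite[OF assms(1)] .
  moreover have "(\<lambda>w. poly N w / poly P w) holomorphic_on UNIV - S"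
    unfolding S_def by (intro holomorphic_intros) auto
  moreover have "path_image (circlepath 0 R) \<subseteq> UNIV - S"
  proof
    fix w assume "w \<in> path_image (circlepath 0 R)"
    then have "norm w = R" using assms(2) by (simp add: path_image_circlepath)
    then show "w \<in> UNIV - S" using roots[of w] unfolding S_def by auto
  qed
  ultimately have "contour_integral (circlepath 0 R) (\<lambda>w. poly N w / poly P w)
      = 2 * pi * \<i> * (\<Sum>z\<in>S. winding_number (circlepath 0 R) z * residue (\<lambda>w. poly N w / poly P w) z)"
    by (intro Residue_theorem) (auto simp: assms(2))
  also have "(\<Sum>z\<in>S. winding_number (circlepath 0 R) z * residue (\<lambda>w. poly N w / poly P w) z)
      = (\<Sum>z\<in>S. residue (\<lambda>w. poly N w / poly P w) z)"
    by (rule sum.cong) (auto simp: S_def winding_number_circlepath roots)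
  finally show ?thesis unfolding S_def .
qed

text \<open>On a large circle \<open>(P Q + H)/P = Q + c/w + G/(w P)\<close> with \<open>c\<close> the top coefficient of \<open>H\<close>
  and \<open>G = X H - c P\<close> of degree \<open>< deg P\<close>; so the integral is \<open>2\<pi>i c + O(1/R)\<close>.\<close>

lemma contour_integral_circlepath_poly_quotient_split:
  fixes P Q H G :: "complex poly" and c :: complex
  assumes G: "G = [:0, 1:] * H - smult c P" and "R > 0"
    and nonzero: "\<And>w. norm w = R \<Longrightarrow> poly P w \<noteq> 0"
  shows "contour_integral (circlepath 0 R) (\<lambda>w. poly (P * Q + H) w / poly P w)
    = 2 * pi * \<i> * c + contour_integral (circlepath 0 R) (\<lambda>w. poly G w / (w * poly P w))"
proof -
  let ?g = "circlepath 0 R" and ?\<phi> = "\<lambda>w. poly G w / (w * poly P w)"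
  have "(poly Q has_contour_integral 0) ?g"
    by (rule Cauchy_theorem_convex_simple[of _ UNIV]) (auto intro: holomorphic_intros)
  moreover have "((\<lambda>w. c / w) has_contour_integral (2 * pi * \<i> * c)) ?g"
    using Cauchy_integral_circlepath[of 0 R "\<lambda>_. c" 0] assms(2) by simp
  moreover have "continuous_on (path_image ?g) ?\<phi>"
    using nonzero assms(2) by (intro continuous_intros) (auto simp: path_image_circlepath)
  then have "(?\<phi> has_contour_integral contour_integral ?g ?\<phi>) ?g"
    by (intro has_contour_integral_integral contour_integrable_continuous_circlepath)
  ultimately have "((\<lambda>w. poly Q w + c / w + ?\<phi> w) has_contour_integral
      (0 + 2 * pi * \<i> * c + contour_integral ?g ?\<phi>)) ?g"
    by (intro has_contour_integral_add)
  then have "((\<lambda>w. poly (P * Q + H) w / poly P w) has_contour_integral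
      (0 + 2 * pi * \<i> * c + contour_integral ?g ?\<phi>)) ?g"
  proof (rule has_contour_integral_eq)
    fix w assume "w \<in> path_image ?g"
    then have "norm w = R" "w \<noteq> 0" using assms(2) by (auto simp: path_image_circlepath)
    then show "poly Q w + c / w + ?\<phi> w = poly (P * Q + H) w / poly P w"
      using nonzero[of w] by (simp add: G field_simps)
  qed
  then show ?thesis by (simp add: contour_integral_unique)
qed

lemma norm_contour_integral_circlepath_le:
  fixes G P :: "complex poly"
  assumes "degree G \<le> n - 1" "n \<ge> 1" "R \<ge> 1"
    and lower: "\<And>w. norm w = R \<Longrightarrow> R ^ n / 2 \<le> norm (poly P w)"
  shows "norm (contour_integral (circlepath 0 R) (\<lambda>w. poly G w / (w * poly P w)))
    \<le> 4 * pi * (\<Sum>i\<le>n - 1. norm (coeff G i)) / R"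
proof -
  define A where "A = (\<Sum>i\<le>n - 1. norm (coeff G i))"
  have A: "A \<ge> 0" unfolding A_def by (auto intro: sum_nonneg)
  have Rn: "R ^ n = R ^ (n - 1) * R" using assms(2) by (metis power_Suc2 Suc_diff_1 less_le_trans zero_less_one)
  have bound: "norm (poly G w / (w * poly P w)) \<le> 2 * A / R ^ 2" if "norm (w - 0) = R" for w
  proof -
    have "R ^ n / 2 \<le> norm (poly P w)" using lower that by simp
    moreover have "norm (poly G w) \<le> A * R ^ (n - 1)"
      unfolding A_def using norm_poly_le_sum_coeff[OF assms(1), of w] that assms(3) by simp
    ultimately have "norm (poly G w) / (R * norm (poly P w)) \<le> (A * R ^ (n - 1)) / (R * (R ^ n / 2))"
      using A assms(3) by (intro frac_le mult_left_mono) auto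
    then show ?thesis using that assms(3) by (simp add: norm_divide norm_mult Rn field_simps power2_eq_square)
  qed
  have "continuous_on (path_image (circlepath 0 R)) (\<lambda>w. poly G w / (w * poly P w))"
  proof (intro continuous_intros ballI)
    fix w assume "w \<in> path_image (circlepath 0 R)"
    then have "norm w = R" using assms(3) by (auto simp: path_image_circlepath)
    moreover have "0 < R ^ n / 2" using assms(3) by simp
    ultimately have "poly P w \<noteq> 0" using lower by fastforce
    moreover have "w \<noteq> 0" using \<open>norm w = R\<close> assms(3) by auto
    ultimately show "w * poly P w \<noteq> 0" by simp
  qed
  then have "((\<lambda>w. poly G w / (w * poly P w)) has_contour_integral
      contour_integral (circlepath 0 R) (\<lambda>w. poly G w / (w * poly P w))) (circlepath 0 R)"
    by (intro has_contour_integral_integral contour_integrable_continuous_circlepath)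
  from has_contour_integral_bound_circlepath[OF this _ _ bound] A assms(3)
  have "norm (contour_integral (circlepath 0 R) (\<lambda>w. poly G w / (w * poly P w))) \<le> 2 * A / R ^ 2 * (2 * pi * R)"
    by simp
  then show ?thesis using assms(3) by (simp add: A_def field_simps power2_eq_square)
qed

lemma degree_monom_1_mult_minus_le:
  fixes P H :: "'a::comm_ring_1 poly"
  assumes monic: "lead_coeff P = 1" and degH: "degree H < degree P"
  shows "degree ([:0, 1:] * H - smult (coeff H (degree P - 1)) P) \<le> degree P - 1"
proof (intro degree_le allI impI)
  fix i assume "degree P - 1 < i"
  then have i: "i \<ge> degree P" by simp
  have "coeff ([:0, 1:] * H) i = coeff H (i - 1)" using i degH by (cases i) auto
  moreover have "coeff H (i - 1) = (if i = degree P then coeff H (degree P - 1) else 0)"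
    using i degH by (auto simp: coeff_eq_0)
  moreover have "coeff P i = (if i = degree P then 1 else 0)"
    using i monic by (auto simp: coeff_eq_0)
  ultimately show "coeff ([:0, 1:] * H - smult (coeff H (degree P - 1)) P) i = 0" by simp
qed

lemma eq_0_if_norm_le_divide:
  fixes x :: "'a::real_normed_vector"
  assumes "\<And>R. R \<ge> R0 \<Longrightarrow> norm x \<le> C / R"
  shows "x = 0"
proof (rule ccontr)
  assume "x \<noteq> 0"
  then have d: "norm x > 0" by simp
  define R where "R = max (max R0 1) (2 * \<bar>C\<bar> / norm x)"
  have R: "R \<ge> 1" unfolding R_def by simp
  have "2 * \<bar>C\<bar> / norm x \<le> R" unfolding R_def by simp
  then have "2 * \<bar>C\<bar> \<le> R * norm x" using d by (simp add: field_simps)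
  have "norm x \<le> C / R" using assms by (simp add: R_def)
  also have "\<dots> \<le> norm x / 2" using R \<open>2 * \<bar>C\<bar> \<le> R * norm x\<close> by (simp add: field_simps)
  finally show False using d by simp
qed

theorem sum_residues_poly_quotient:
  fixes P Q H :: "complex poly"
  assumes monic: "lead_coeff P = 1" and degH: "degree H < degree P"
  shows "(\<Sum>z\<in>{z. poly P z = 0}. residue (\<lambda>w. poly (P * Q + H) w / poly P w) z) = coeff H (degree P - 1)"
    (is "?res = ?c")
proof -
  define n where "n = degree P"
  define G where "G = [:0, 1:] * H - smult ?c P"
  define A where "A = (\<Sum>i\<le>n - 1. norm (coeff G i))"
  have n: "n \<ge> 1" using degH n_def by simp
  have degG: "degree G \<le> n - 1"
    unfolding G_def n_def by (rule degree_monom_1_mult_minus_le[OF monic degH])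
  obtain R0 where R0: "R0 \<ge> 1" "\<And>z. R0 \<le> norm z \<Longrightarrow> norm z ^ n / 2 \<le> norm (poly P z)"
    using monic_poly_norm_ge[OF monic n_def[symmetric] n] by blast
  have "norm (?res - ?c) \<le> 2 * A / R" if "R \<ge> R0" for R
  proof -
    have R: "R \<ge> 1" "R > 0" using that R0 by auto
    have lower: "R ^ n / 2 \<le> norm (poly P w)" if "norm w = R" for w
      using R0(2)[of w] that \<open>R \<ge> R0\<close> by simp
    have "0 < R ^ n / 2" using R by simp
    then have nonzero: "poly P w \<noteq> 0" if "norm w = R" for w using lower[OF that] by fastforce
    have roots: "norm z < R" if "poly P z = 0" for z
    proof (rule ccontr)
      assume "\<not> norm z < R"
      then have "R0 \<le> norm z" "1 \<le> norm z" using \<open>R \<ge> R0\<close> R by auto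
      then have "norm z ^ n / 2 \<le> 0" using R0(2)[of z] that by simp
      moreover have "1 \<le> norm z ^ n" using \<open>1 \<le> norm z\<close> by (rule one_le_power)
      ultimately show False by simp
    qed
    have "P \<noteq> 0" using monic by auto
    then have "2 * pi * \<i> * ?res = contour_integral (circlepath 0 R) (\<lambda>w. poly (P * Q + H) w / poly P w)"
      using contour_integral_circlepath_poly_quotient[OF _ R(2) roots, of P "P * Q + H"] by simp
    also have "\<dots> = 2 * pi * \<i> * ?c + contour_integral (circlepath 0 R) (\<lambda>w. poly G w / (w * poly P w))"
      by (rule contour_integral_circlepath_poly_quotient_split[OF G_def R(2) nonzero])
    finally have "contour_integral (circlepath 0 R) (\<lambda>w. poly G w / (w * poly P w))
        = 2 * pi * \<i> * (?res - ?c)"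
      by (simp add: algebra_simps)
    then have "2 * pi * norm (?res - ?c)
        = norm (contour_integral (circlepath 0 R) (\<lambda>w. poly G w / (w * poly P w)))"
      by (simp add: norm_mult)
    also have "\<dots> \<le> 4 * pi * A / R"
      unfolding A_def by (rule norm_contour_integral_circlepath_le) (use degG n R lower in auto)
    also have "\<dots> = 2 * pi * (2 * A / R)" by simp
    finally show ?thesis by (rule mult_left_le_imp_le) (simp add: pi_gt_zero)
  qed
  then have "?res - ?c = 0" by (rule eq_0_if_norm_le_divide)
  then show ?thesis by simp
qed

lemma qroot_nonzero: "qroot r s \<noteq> 0"
  by (simp add: qroot_def)

lemma qroot_power:
  assumes "r > 0"
  shows "qroot r s ^ m = exp (2 * of_real pi * \<i> * of_nat (m * s) / of_nat (2 * r))"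
proof -
  have "qroot r s ^ m = exp ((\<i> * of_real (pi * real s / real r)) * of_nat m)"
    unfolding exp_of_nat2_mult qroot_def ..
  also have "(\<i> * of_real (pi * real s / real r)) * of_nat m
      = 2 * of_real pi * \<i> * of_nat (m * s) / (of_nat (2 * r) :: complex)"
    using assms by (simp add: field_simps)
  finally show ?thesis .
qed

lemma qroot_power_r:
  assumes "r > 0" "odd s"
  shows "qroot r s ^ r = -1"
proof -
  have "qroot r s ^ r = exp ((\<i> * of_real pi) * of_nat s)"
    unfolding qroot_def exp_of_nat2_mult[symmetric]
    using assms by (simp add: divide_simps mult.commute mult.left_commute)
  also have "\<dots> = (-1) ^ s" by (simp add: exp_of_nat2_mult exp_pi_i')
  finally show ?thesis using assms by simp
qed

lemma qroot_power_even_neq_1: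
  assumes "r > 0" "coprime r s" "0 < m" "m < r"
  shows "qroot r s ^ (2 * m) \<noteq> 1"
proof
  assume "qroot r s ^ (2 * m) = 1"
  then have "exp (2 * of_real pi * \<i> * of_nat (2 * m * s) / of_nat (2 * r)) = 1"
    using qroot_power[OF assms(1)] by simp
  then have "(2 * r) dvd (2 * m * s)"
    using assms by (subst (asm) complex_root_unity_eq_1) auto
  then have "r dvd m * s" by auto
  then have "r dvd m" using assms(2) by (metis coprime_dvd_mult_left_iff)
  with assms show False by (auto dest: dvd_imp_le)
qed

lemma cnj_qroot: "cnj (qroot r s) = inverse (qroot r s)"
  by (simp add: qroot_def exp_cnj exp_minus[symmetric])

definition qint_re :: "nat \<Rightarrow> nat \<Rightarrow> nat \<Rightarrow> real" where
  "qint_re r s n = Re (qint r s n)"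

lemma qint_eq_of_real: "qint r s n = of_real (qint_re r s n)"
proof -
  define q where "q = qroot r s"
  have "cnj (qint r s n) = (inverse q ^ n - q ^ n) / (inverse q - q)"
    unfolding qint_def Let_def q_def[symmetric] by (simp add: cnj_qroot q_def)
  also have "\<dots> = qint r s n"
    unfolding qint_def Let_def q_def[symmetric] by (metis minus_diff_eq minus_divide_divide)
  finally have "Im (cnj (qint r s n)) = Im (qint r s n)" by simp
  then have "Im (qint r s n) = 0" by simp
  then show ?thesis unfolding qint_re_def by (simp add: complex_eq_iff)
qed

lemma qint_ptolemy:
  "qint r s (x + y) * qint r s (x + z) = qint r s x * qint r s (x + y + z) + qint r s y * qint r s z"
proof -
  define q where "q = qroot r s"
  have q0: "q \<noteq> 0" using qroot_nonzero q_def by simp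
  define A where "A = q ^ x" define B where "B = q ^ y" define C where "C = q ^ z"
  define A' where "A' = inverse q ^ x" define B' where "B' = inverse q ^ y"
  define C' where "C' = inverse q ^ z"
  have inv: "A * A' = 1" "B * B' = 1" "C * C' = 1"
    using q0 unfolding A_def A'_def B_def B'_def C_def C'_def
    by (simp_all add: power_mult_distrib[symmetric])
  have "(A*B - A'*B') * (A*C - A'*C') = (A - A') * (A*B*C - A'*B'*C') + (B - B') * (C - C')"
  proof -
    have "(A*B - A'*B') * (A*C - A'*C') - ((A - A') * (A*B*C - A'*B'*C') + (B - B') * (C - C'))
       = (A*A' - 1) * (B*C - B*C' - B'*C + B'*C')"
      by (simp add: algebra_simps)
    also have "\<dots> = 0" using inv by simp
    finally show ?thesis by simp
  qed
  then show ?thesis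
    unfolding qint_def Let_def q_def[symmetric]
    unfolding power_add A_def[symmetric] B_def[symmetric] C_def[symmetric]
      A'_def[symmetric] B'_def[symmetric] C'_def[symmetric]
    by (simp add: divide_simps)
qed

lemma qint_reflect:
  assumes "r > 0" "odd s" "n \<le> r"
  shows "qint r s (r - n) = qint r s n"
proof -
  define q where "q = qroot r s"
  have q0: "q \<noteq> 0" using qroot_nonzero q_def by simp
  have "q ^ (r - n) * q ^ n = -1"
    using qroot_power_r[OF assms(1,2)] assms(3) by (simp add: q_def power_add[symmetric])
  then have 1: "q ^ (r - n) = - (inverse q ^ n)"
    using q0 by (simp add: field_simps power_inverse)
  then have 2: "inverse q ^ (r - n) = - (q ^ n)"
    by (metis inverse_inverse_eq inverse_minus_eq power_inverse)
  show ?thesis unfolding qint_def Let_def q_def[symmetric] 1 2 by simp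
qed

lemma qint_nonzero:
  assumes "r > 0" "coprime r s" "0 < n" "n < r"
  shows "qint r s n \<noteq> 0"
proof -
  define q where "q = qroot r s"
  have q0: "q \<noteq> 0" using qroot_nonzero q_def by simp
  have "q ^ m - inverse q ^ m \<noteq> 0" if "0 < m" "m < r" for m
  proof
    assume "q ^ m - inverse q ^ m = 0"
    then have "q ^ m * q ^ m = 1" using q0 by (simp add: field_simps power_inverse)
    then have "q ^ (2 * m) = 1" by (simp add: power_add[symmetric] mult_2)
    with qroot_power_even_neq_1[OF assms(1,2) that] show False by (simp add: q_def)
  qed
  note ne = this
  have "q - inverse q \<noteq> 0" using ne[of 1] assms by simp
  then show ?thesis using ne[OF assms(3,4)] unfolding qint_def Let_def q_def[symmetric] by simp
qed

lemma qint_1: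
  assumes "r > 1" "coprime r s"
  shows "qint r s 1 = 1"
proof -
  have "qint r s 1 \<noteq> 0" using qint_nonzero[of r s 1] assms by simp
  then show ?thesis unfolding qint_def Let_def by (simp split: if_splits)
qed

lemma qint_re_ptolemy:
  "qint_re r s (x + y) * qint_re r s (x + z)
     = qint_re r s x * qint_re r s (x + y + z) + qint_re r s y * qint_re r s z"
  using qint_ptolemy[of r s x y z] unfolding qint_eq_of_real
  by (metis of_real_add of_real_eq_iff of_real_mult)

lemma of_int_eps: "real_of_int (eps r s n) = sgn (qint_re r s n)"
  unfolding eps_def qint_re_def sgn_if by auto

definition qfact_re :: "nat \<Rightarrow> nat \<Rightarrow> nat \<Rightarrow> real" where
  "qfact_re r s n = (\<Prod>k\<in>{1..n}. qint_re r s k)"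

lemma qfact_eq_of_real: "qfact r s n = of_real (qfact_re r s n)"
  unfolding qfact_def qfact_re_def qint_eq_of_real by simp

section \<open>Sign exponents of the structure constants\<close>

text \<open>The signs \<open>\<epsilon>\<^sub>n = (-1)^(ex n)\<close> are abstracted into a locale. Its last assumption is the
  sign constraint coming from Ptolemy's identity: when \<open>[x][x+y+z]\<close> and \<open>[y][z]\<close> have the same
  sign, so does their sum \<open>[x+y][x+z]\<close>.\<close>

locale sign_exponents =
  fixes r :: nat and ex :: "nat \<Rightarrow> nat"
  assumes r_ge_3: "3 \<le> r"
    and ex_reflect: "1 \<le> n \<Longrightarrow> n \<le> r - 1 \<Longrightarrow> ex (r - n) = ex n"
    and ex_ptolemy: "1 \<le> x \<Longrightarrow> 1 \<le> y \<Longrightarrow> 1 \<le> z \<Longrightarrow> x + y + z \<le> r - 1 \<Longrightarrow>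
      even (ex x + ex y + ex z + ex (x + y + z)) \<Longrightarrow>
      even (ex x + ex (x + y) + ex (x + z) + ex (x + y + z))"
begin

fun fexp :: "nat \<Rightarrow> nat" where
  "fexp 0 = 0"
| "fexp (Suc n) = fexp n + ex (Suc n)"

text \<open>\<open>cexp a b c\<close> is the sign exponent of \<open>\<langle>b+c, a+c, a+b\<rangle> / \<eta>(e\<^sub>a\<^sub>+\<^sub>b, e\<^sub>a\<^sub>+\<^sub>b)\<close>,
  \<open>fexp n\<close> being that of \<open>[n]!\<close>.\<close>

definition cexp :: "nat \<Rightarrow> nat \<Rightarrow> nat \<Rightarrow> nat" where
  "cexp a b c = a + b + c + fexp (Suc (a + b + c)) + fexp a + fexp b + fexp c
     + fexp (a + b) + fexp (a + c) + fexp (b + c) + (a + b) + ex (Suc (a + b))"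

definition rsign :: "nat \<Rightarrow> rat" where
  "rsign n = (-1) ^ (ex n + ex (Suc n))"

text \<open>Structure constants in the coordinates \<open>i = b+c, j = a+c, k = a+b\<close>, taken over the
  integers and extended by zero, so that shifting \<open>a, b, c\<close> never leaves the domain.\<close>

definition sc_abc :: "int \<Rightarrow> int \<Rightarrow> int \<Rightarrow> rat" where
  "sc_abc a b c = (if 0 \<le> a \<and> 0 \<le> b \<and> 0 \<le> c \<and> a + b + c \<le> int r - 2
     then (-1) ^ cexp (nat a) (nat b) (nat c) else 0)"

lemma sc_abc_eq_0: "a < 0 \<or> b < 0 \<or> c < 0 \<or> a + b + c > int r - 2 \<Longrightarrow> sc_abc a b c = 0"
  unfolding sc_abc_def by auto

lemma sc_abc_of_nat:
  "x = int a \<Longrightarrow> y = int b \<Longrightarrow> z = int c \<Longrightarrow> int a + int b + int c \<le> int r - 2 \<Longrightarrow>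
     sc_abc x y z = (-1) ^ cexp a b c"
  unfolding sc_abc_def by simp

lemma rsign_nat: "x = int n \<Longrightarrow> rsign (nat x) = (-1) ^ (ex n + ex (Suc n))"
  unfolding rsign_def by simp

lemma even_cexp_0: "even (cexp a b 0)"
  unfolding cexp_def by (simp del: even_add odd_add) presburger

context
  fixes u v w :: int
  assumes range: "0 \<le> v + w" "v + w \<le> int r - 2" "1 \<le> u + w" "u + w - 1 \<le> int r - 2"
    "0 \<le> u + v" "u + v \<le> int r - 2"
begin

lemma sc_abc_shift_v_neg:
  assumes "v = -1" "u \<ge> 1" "w \<ge> 1"
  shows "sc_abc u v w - rsign (nat (u + w - 1)) * sc_abc (u - 1) (v + 1) (w - 1)
       = sc_abc (u - 1) v w - rsign (nat (u + v + 1)) * sc_abc u (v + 1) (w - 1)"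
proof -
  define a c where "a = nat (u - 1)" and "c = nat (w - 1)"
  have ac: "u = int a + 1" "w = int c + 1" using assms by (simp_all add: a_def c_def)
  have T2: "sc_abc (u - 1) (v + 1) (w - 1) = (-1) ^ cexp a 0 c"
    by (rule sc_abc_of_nat) (use ac assms range in linarith)+
  have T4: "sc_abc u (v + 1) (w - 1) = (-1) ^ cexp (Suc a) 0 c"
    by (rule sc_abc_of_nat) (use ac assms range in linarith)+
  have c1: "rsign (nat (u + w - 1)) = (-1) ^ (ex (Suc (a + c)) + ex (Suc (Suc (a + c))))"
    by (rule rsign_nat) (use ac in simp)
  have c2: "rsign (nat (u + v + 1)) = (-1) ^ (ex (Suc a) + ex (Suc (Suc a)))"
    by (rule rsign_nat) (use ac assms in simp)
  have "even ((ex (Suc (a + c)) + ex (Suc (Suc (a + c)))) + cexp a 0 c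
      + (ex (Suc a) + ex (Suc (Suc a))) + cexp (Suc a) 0 c)"
    unfolding cexp_def by (simp del: even_add odd_add) presburger
  then have "(-1::rat) ^ ((ex (Suc (a + c)) + ex (Suc (Suc (a + c)))) + cexp a 0 c)
      = (-1) ^ ((ex (Suc a) + ex (Suc (Suc a))) + cexp (Suc a) 0 c)"
    unfolding neg_one_power_eq_iff by presburger
  then show ?thesis unfolding T2 T4 c1 c2 using assms by (simp add: sc_abc_eq_0 power_add)
qed

lemma sc_abc_shift_u_zero:
  assumes "v \<ge> 0" "u = 0" "w \<ge> 1"
  shows "sc_abc u v w - rsign (nat (u + w - 1)) * sc_abc (u - 1) (v + 1) (w - 1)
       = sc_abc (u - 1) v w - rsign (nat (u + v + 1)) * sc_abc u (v + 1) (w - 1)"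
proof -
  define b c where "b = nat v" and "c = nat (w - 1)"
  have bc: "v = int b" "w = int c + 1" using assms by (simp_all add: b_def c_def)
  have T1: "sc_abc u v w = (-1) ^ cexp 0 b (Suc c)"
    by (rule sc_abc_of_nat) (use bc assms range in linarith)+
  have T4: "sc_abc u (v + 1) (w - 1) = (-1) ^ cexp 0 (Suc b) c"
    by (rule sc_abc_of_nat) (use bc assms range in linarith)+
  have c2: "rsign (nat (u + v + 1)) = (-1) ^ (ex (Suc b) + ex (Suc (Suc b)))"
    by (rule rsign_nat) (use bc assms in simp)
  have "odd (cexp 0 b (Suc c) + (ex (Suc b) + ex (Suc (Suc b))) + cexp 0 (Suc b) c)"
    unfolding cexp_def by (simp del: even_add odd_add) presburger
  then have "(-1::rat) ^ cexp 0 b (Suc c) = - ((-1) ^ ((ex (Suc b) + ex (Suc (Suc b))) + cexp 0 (Suc b) c))"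
    by (intro neg_one_power_eq_minus) presburger
  then show ?thesis unfolding T1 T4 c2 using assms by (simp add: sc_abc_eq_0 power_add)
qed

lemma sc_abc_shift_w_zero:
  assumes "v \<ge> 0" "u \<ge> 1" "w = 0"
  shows "sc_abc u v w - rsign (nat (u + w - 1)) * sc_abc (u - 1) (v + 1) (w - 1)
       = sc_abc (u - 1) v w - rsign (nat (u + v + 1)) * sc_abc u (v + 1) (w - 1)"
proof -
  define a b where "a = nat (u - 1)" and "b = nat v"
  have ab: "u = int a + 1" "v = int b" using assms by (simp_all add: a_def b_def)
  have "sc_abc u v w = (-1) ^ cexp (Suc a) b 0"
    by (rule sc_abc_of_nat) (use ab assms range in linarith)+
  moreover have "sc_abc (u - 1) v w = (-1) ^ cexp a b 0"
    by (rule sc_abc_of_nat) (use ab assms range in linarith)+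
  ultimately show ?thesis
    using assms even_cexp_0[of a b] even_cexp_0[of "Suc a" b] by (simp add: sc_abc_eq_0)
qed

text \<open>In the interior all four terms are \<open>\<plusminus>1\<close>; Ptolemy's sign constraint \<open>ex_ptolemy\<close>
  excludes the one sign pattern for which the identity would fail.\<close>

lemma sc_abc_shift_interior:
  assumes "v \<ge> 0" "u \<ge> 1" "w \<ge> 1" "u + v + w \<le> int r - 2"
  shows "sc_abc u v w - rsign (nat (u + w - 1)) * sc_abc (u - 1) (v + 1) (w - 1)
       = sc_abc (u - 1) v w - rsign (nat (u + v + 1)) * sc_abc u (v + 1) (w - 1)"
proof -
  define a b c where "a = nat (u - 1)" and "b = nat v" and "c = nat (w - 1)"
  have abc: "u = int a + 1" "v = int b" "w = int c + 1"
    using assms by (simp_all add: a_def b_def c_def)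
  have T1: "sc_abc u v w = (-1) ^ cexp (Suc a) b (Suc c)"
    by (rule sc_abc_of_nat) (use abc assms range in linarith)+
  have T2: "sc_abc (u - 1) (v + 1) (w - 1) = (-1) ^ cexp a (Suc b) c"
    by (rule sc_abc_of_nat) (use abc assms range in linarith)+
  have T3: "sc_abc (u - 1) v w = (-1) ^ cexp a b (Suc c)"
    by (rule sc_abc_of_nat) (use abc assms range in linarith)+
  have T4: "sc_abc u (v + 1) (w - 1) = (-1) ^ cexp (Suc a) (Suc b) c"
    by (rule sc_abc_of_nat) (use abc assms range in linarith)+
  have c1: "rsign (nat (u + w - 1)) = (-1) ^ (ex (Suc (a + c)) + ex (Suc (Suc (a + c))))"
    by (rule rsign_nat) (use abc in simp)
  have c2: "rsign (nat (u + v + 1)) = (-1) ^ (ex (Suc (Suc (a + b))) + ex (Suc (Suc (Suc (a + b)))))"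
    by (rule rsign_nat) (use abc in simp)
  define X1 where "X1 = cexp (Suc a) b (Suc c)"
  define X2 where "X2 = cexp a (Suc b) c + ex (Suc (a + c)) + ex (Suc (Suc (a + c))) + 1"
  define X3 where "X3 = cexp a b (Suc c)"
  define X4 where "X4 = cexp (Suc a) (Suc b) c + ex (Suc (Suc (a + b))) + ex (Suc (Suc (Suc (a + b)))) + 1"
  have p1: "even (X1 + X2 + X3 + X4)"
    unfolding X1_def X2_def X3_def X4_def cexp_def by (simp del: even_add odd_add) presburger
  have e2: "even (X1 + X2 + ex (Suc c) + ex (Suc a) + ex (Suc b) + ex (Suc (Suc (Suc (a + b + c)))))"
    unfolding X1_def X2_def cexp_def by (simp del: even_add odd_add) presburger
  have e3: "even (X1 + X3 + ex (Suc a) + ex (Suc (Suc (a + c))) + ex (Suc (Suc (a + b)))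
      + ex (Suc (Suc (Suc (a + b + c)))))"
    unfolding X1_def X3_def cexp_def by (simp del: even_add odd_add) presburger
  have "a + b + c + 3 \<le> r - 1" using abc assms by linarith
  then have "even (ex (Suc a) + ex (Suc b) + ex (Suc c) + ex (Suc (Suc (Suc (a + b + c))))) \<Longrightarrow>
      even (ex (Suc a) + ex (Suc (Suc (a + b))) + ex (Suc (Suc (a + c))) + ex (Suc (Suc (Suc (a + b + c)))))"
    using ex_ptolemy[of "Suc a" "Suc b" "Suc c"] by simp
  then have p2: "odd (X1 + X2) \<or> even (X1 + X3)" using e2 e3 by presburger
  have "(-1::rat) ^ X1 + (-1) ^ X2 = (-1) ^ X3 + (-1) ^ X4"
    using neg_one_power_add_eq[OF p1 p2] .
  then show ?thesis unfolding T1 T2 T3 T4 c1 c2 X1_def X2_def X3_def X4_def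
    by (simp add: power_add algebra_simps)
qed

lemma sc_abc_shift_boundary:
  assumes "v \<ge> 0" "u \<ge> 1" "w \<ge> 1" "u + v + w = int r - 1"
  shows "sc_abc u v w - rsign (nat (u + w - 1)) * sc_abc (u - 1) (v + 1) (w - 1)
       = sc_abc (u - 1) v w - rsign (nat (u + v + 1)) * sc_abc u (v + 1) (w - 1)"
proof -
  define a b c where "a = nat (u - 1)" and "b = nat v" and "c = nat (w - 1)"
  have abc: "u = int a + 1" "v = int b" "w = int c + 1"
    using assms by (simp_all add: a_def b_def c_def)
  have S: "a + b + c + 3 = r" using abc assms by linarith
  have T2: "sc_abc (u - 1) (v + 1) (w - 1) = (-1) ^ cexp a (Suc b) c"
    by (rule sc_abc_of_nat) (use abc assms range in linarith)+
  have T3: "sc_abc (u - 1) v w = (-1) ^ cexp a b (Suc c)"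
    by (rule sc_abc_of_nat) (use abc assms range in linarith)+
  have c1: "rsign (nat (u + w - 1)) = (-1) ^ (ex (Suc (a + c)) + ex (Suc (Suc (a + c))))"
    by (rule rsign_nat) (use abc in simp)
  have s1: "ex (Suc b) = ex (Suc (Suc (a + c)))"
    using ex_reflect[of "Suc (Suc (a + c))"] S by (auto simp: numeral_eq_Suc)
  have s2: "ex (Suc (Suc (a + b))) = ex (Suc c)"
    using ex_reflect[of "Suc c"] S by (auto simp: numeral_eq_Suc)
  have "odd (cexp a (Suc b) c + (ex (Suc (a + c)) + ex (Suc (Suc (a + c)))) + cexp a b (Suc c))"
    using s1 s2 unfolding cexp_def by (simp del: even_add odd_add) presburger
  then have "(-1::rat) ^ cexp a b (Suc c)
      = - ((-1) ^ ((ex (Suc (a + c)) + ex (Suc (Suc (a + c)))) + cexp a (Suc b) c))"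
    by (intro neg_one_power_eq_minus) presburger
  then show ?thesis unfolding T2 T3 c1 using assms by (simp add: sc_abc_eq_0 power_add)
qed

lemma sc_abc_shift:
  "sc_abc u v w - rsign (nat (u + w - 1)) * sc_abc (u - 1) (v + 1) (w - 1)
     = sc_abc (u - 1) v w - rsign (nat (u + v + 1)) * sc_abc u (v + 1) (w - 1)"
proof -
  consider "u < 0 \<or> w < 0 \<or> v < -1 \<or> u + v + w \<ge> int r"
    | "v = -1" "u \<ge> 1" "w = 0" | "v = -1" "u \<ge> 1" "w \<ge> 1"
    | "v \<ge> 0" "u = 0" "w \<ge> 1" | "v \<ge> 0" "u \<ge> 1" "w = 0"
    | "v \<ge> 0" "u \<ge> 1" "w \<ge> 1" "u + v + w \<le> int r - 2"
    | "v \<ge> 0" "u \<ge> 1" "w \<ge> 1" "u + v + w = int r - 1"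
    using range by linarith
  then show ?thesis
  proof cases
    case 1 then show ?thesis by (auto simp: sc_abc_eq_0)
  next
    case 2 then show ?thesis by (auto simp: sc_abc_eq_0)
  next
    case 3 then show ?thesis by (rule sc_abc_shift_v_neg)
  next
    case 4 then show ?thesis by (rule sc_abc_shift_u_zero)
  next
    case 5 then show ?thesis by (rule sc_abc_shift_w_zero)
  next
    case 6 then show ?thesis by (rule sc_abc_shift_interior)
  next
    case 7 then show ?thesis by (rule sc_abc_shift_boundary)
  qed
qed

end

definition sc :: "nat \<Rightarrow> nat \<Rightarrow> nat \<Rightarrow> rat" where
  "sc i j k = (if admissible r i j k
     then (-1) ^ cexp ((j + k - i) div 2) ((i + k - j) div 2) ((i + j - k) div 2) else 0)"

lemma sc_odd: "odd (i + j + k) \<Longrightarrow> sc i j k = 0"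
  unfolding sc_def admissible_def by auto

lemma sc_eq_sc_abc:
  fixes a b c :: int
  assumes "int i = b + c" "int j = a + c" "int k = a + b"
  shows "sc i j k = sc_abc a b c"
proof (cases "a \<ge> 0 \<and> b \<ge> 0 \<and> c \<ge> 0")
  case True
  have d: "(j + k - i) div 2 = nat a" "(i + k - j) div 2 = nat b" "(i + j - k) div 2 = nat c"
    using assms True by (simp_all add: nat_eq_iff)
  have "admissible r i j k \<longleftrightarrow> a + b + c \<le> int r - 2"
    unfolding admissible_def using assms True r_ge_3 by auto presburger+
  then show ?thesis unfolding sc_def sc_abc_def d using True by simp
next
  case False
  then have "\<not> admissible r i j k" unfolding admissible_def using assms by auto
  then show ?thesis unfolding sc_def using False by (auto simp: sc_abc_eq_0)
qed

lemma sc_1_left: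
  assumes "l \<le> r - 2" "j \<le> r - 2"
  shows "sc 1 l j = (if j = Suc l then 1 else 0) + (if Suc j = l then - rsign l else 0)"
proof -
  consider "j = Suc l" | "Suc j = l" | "j \<noteq> Suc l" "Suc j \<noteq> l" by blast
  then show ?thesis
  proof cases
    case 1
    have "admissible r 1 l j" unfolding admissible_def using 1 assms by auto
    moreover have "(l + j - 1) div 2 = l" "(1 + j - l) div 2 = 1" "(1 + l - j) div 2 = 0"
      using 1 by auto
    ultimately show ?thesis unfolding sc_def using 1 even_cexp_0[of l 1] by simp
  next
    case 2
    have "admissible r 1 l j" unfolding admissible_def using 2 assms by auto
    moreover have "(l + j - 1) div 2 = j" "(1 + j - l) div 2 = 0" "(1 + l - j) div 2 = 1"
      using 2 by auto
    moreover have "odd (cexp j 0 (Suc 0) + (ex (Suc j) + ex (Suc (Suc j))))"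
      unfolding cexp_def by (simp del: even_add odd_add) presburger
    then have "(-1::rat) ^ cexp j 0 (Suc 0) = - ((-1) ^ (ex (Suc j) + ex (Suc (Suc j))))"
      by (rule neg_one_power_eq_minus)
    ultimately show ?thesis unfolding sc_def rsign_def using 2 by simp
  next
    case 3
    then have "j = l \<or> j + 1 < l \<or> l + 1 < j" by linarith
    then have "\<not> admissible r 1 l j" unfolding admissible_def by auto
    then show ?thesis unfolding sc_def using 3 by simp
  qed
qed

lemma sc_unit:
  assumes "i \<le> r - 2" "k \<le> r - 2"
  shows "sc i 0 k = (if k = i then 1 else 0)"
proof (cases "k = i")
  case True
  then have "admissible r i 0 k" unfolding admissible_def using assms by auto
  then show ?thesis unfolding sc_def using True even_cexp_0[of 0 i] by simp
next
  case False
  then have "\<not> admissible r i 0 k" unfolding admissible_def by auto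
  then show ?thesis unfolding sc_def using False by simp
qed

lemma sc_top:
  assumes "i \<le> r - 2"
  shows "sc i (r - 2) (r - 2) = (if i = 0 then 1 else 0)"
proof (cases "i = 0")
  case True
  then have "admissible r i (r - 2) (r - 2)" unfolding admissible_def using assms by auto
  then show ?thesis unfolding sc_def using True even_cexp_0[of "r - 2" 0] by simp
next
  case False
  then have "\<not> admissible r i (r - 2) (r - 2)" unfolding admissible_def by auto
  then show ?thesis unfolding sc_def using False by simp
qed

lemma sum_sc_1_left:
  assumes "l \<le> r - 2"
  shows "(\<Sum>j\<le>r - 2. sc 1 l j * f j)
    = (if Suc l \<le> r - 2 then f (Suc l) else 0) - (if l \<ge> 1 then rsign l * f (l - 1) else 0)"
proof -
  have "(\<Sum>j\<le>r - 2. sc 1 l j * f j) = (\<Sum>j\<le>r - 2. (if j = Suc l then f j else 0)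
      + (if j = l - 1 \<and> l \<ge> 1 then - rsign l * f j else 0))"
    by (intro sum.cong refl) (use sc_1_left[OF assms] in auto)
  also have "\<dots> = (if Suc l \<le> r - 2 then f (Suc l) else 0) - (if l \<ge> 1 then rsign l * f (l - 1) else 0)"
    using assms by (auto simp: sum.distrib sum.delta')
  finally show ?thesis .
qed

lemma sum_sc_1_right:
  assumes "m \<le> r - 2"
  shows "(\<Sum>k\<le>r - 2. f k * sc 1 k m)
    = (if m \<ge> 1 then f (m - 1) else 0) - (if Suc m \<le> r - 2 then rsign (Suc m) * f (Suc m) else 0)"
proof -
  have "(\<Sum>k\<le>r - 2. f k * sc 1 k m) = (\<Sum>k\<le>r - 2. (if k = m - 1 \<and> m \<ge> 1 then f k else 0)
      + (if k = Suc m then - rsign (Suc m) * f k else 0))"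
    by (intro sum.cong refl) (use sc_1_left[OF _ assms] in auto)
  also have "\<dots> = (if m \<ge> 1 then f (m - 1) else 0) - (if Suc m \<le> r - 2 then rsign (Suc m) * f (Suc m) else 0)"
    using assms by (auto simp: sum.distrib sum.delta')
  finally show ?thesis .
qed

context
  fixes i l m :: nat and u v w :: int
  assumes uvw: "int i = v + w" "int l = u + w - 1" "int m = u + v"
begin

lemma sum_sc_1_left_abc:
  assumes "l \<le> r - 2"
  shows "(\<Sum>j\<le>r - 2. sc 1 l j * sc i j m)
    = sc_abc u v w - rsign (nat (u + w - 1)) * sc_abc (u - 1) (v + 1) (w - 1)"
proof -
  have nl: "nat (u + w - 1) = l" using uvw by simp
  have "(if Suc l \<le> r - 2 then sc i (Suc l) m else 0) = sc_abc u v w"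
  proof (cases "Suc l \<le> r - 2")
    case False
    then have "sc_abc u v w = 0" by (intro sc_abc_eq_0) (use uvw in linarith)
    with False show ?thesis by simp
  qed (use sc_eq_sc_abc[of i v w "Suc l" u m] uvw in simp)
  moreover have "(if l \<ge> 1 then rsign l * sc i (l - 1) m else 0)
      = rsign (nat (u + w - 1)) * sc_abc (u - 1) (v + 1) (w - 1)"
  proof (cases "l \<ge> 1")
    case False
    then have "sc_abc (u - 1) (v + 1) (w - 1) = 0" by (intro sc_abc_eq_0) (use uvw in linarith)
    with False show ?thesis by simp
  qed (use sc_eq_sc_abc[of i "v + 1" "w - 1" "l - 1" "u - 1" m] uvw nl in simp)
  ultimately show ?thesis unfolding sum_sc_1_left[OF assms] by simp
qed

lemma sum_sc_1_right_abc:
  assumes "m \<le> r - 2"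
  shows "(\<Sum>k\<le>r - 2. sc i l k * sc 1 k m)
    = sc_abc (u - 1) v w - rsign (nat (u + v + 1)) * sc_abc u (v + 1) (w - 1)"
proof -
  have nm: "nat (u + v + 1) = Suc m" using uvw by simp
  have "(if m \<ge> 1 then sc i l (m - 1) else 0) = sc_abc (u - 1) v w"
  proof (cases "m \<ge> 1")
    case False
    then have "sc_abc (u - 1) v w = 0" by (intro sc_abc_eq_0) (use uvw in linarith)
    with False show ?thesis by simp
  qed (use sc_eq_sc_abc[of i v w l "u - 1" "m - 1"] uvw in simp)
  moreover have "(if Suc m \<le> r - 2 then rsign (Suc m) * sc i l (Suc m) else 0)
      = rsign (nat (u + v + 1)) * sc_abc u (v + 1) (w - 1)"
  proof (cases "Suc m \<le> r - 2")
    case False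
    then have "sc_abc u (v + 1) (w - 1) = 0" by (intro sc_abc_eq_0) (use uvw in linarith)
    with False show ?thesis by simp
  qed (use sc_eq_sc_abc[of i "v + 1" "w - 1" l u "Suc m"] uvw nm in simp)
  ultimately show ?thesis unfolding sum_sc_1_right[OF assms] by simp
qed

end

text \<open>Coefficientwise, \<open>e\<^sub>i (e\<^sub>1 e\<^sub>l) = e\<^sub>1 (e\<^sub>i e\<^sub>l)\<close>.\<close>

lemma sc_mult_1_commute:
  assumes "i \<le> r - 2" "l \<le> r - 2" "m \<le> r - 2"
  shows "(\<Sum>j\<le>r - 2. sc 1 l j * sc i j m) = (\<Sum>k\<le>r - 2. sc i l k * sc 1 k m)"
proof (cases "even (i + l + m)")
  case True
  then show ?thesis
    unfolding sum_sc_1_left[OF assms(2)] sum_sc_1_right[OF assms(3)] by (auto simp: sc_odd)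
next
  case False
  define u v w where "u = (int l + 1 + int m - int i) div 2"
    and "v = (int i + int m - int l - 1) div 2" and "w = (int i + int l + 1 - int m) div 2"
  have uvw: "int i = v + w" "int l = u + w - 1" "int m = u + v"
    using False unfolding u_def v_def w_def by presburger+
  moreover have "0 \<le> v + w" "v + w \<le> int r - 2" "1 \<le> u + w" "u + w - 1 \<le> int r - 2" "0 \<le> u + v"
    "u + v \<le> int r - 2"
    using uvw assms r_ge_3 by linarith+
  ultimately show ?thesis
    unfolding sum_sc_1_left_abc[OF uvw assms(2)] sum_sc_1_right_abc[OF uvw assms(3)]
    by (intro sc_abc_shift)
qed

end

definition eps_exp :: "nat \<Rightarrow> nat \<Rightarrow> nat \<Rightarrow> nat" where
  "eps_exp r s n = (if eps r s n = 1 then 0 else 1)"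

locale quantum_parameters =
  fixes r s :: nat
  assumes r_ge_3: "3 \<le> r" and odd_r: "odd r" and odd_s: "odd s" and coprime_r_s: "coprime r s"
begin

lemma qint_re_nonzero: "1 \<le> n \<Longrightarrow> n \<le> r - 1 \<Longrightarrow> qint_re r s n \<noteq> 0"
  using qint_nonzero[of r s n] r_ge_3 coprime_r_s by (simp add: qint_eq_of_real)

lemma eps_eq_neg_one_power: "1 \<le> n \<Longrightarrow> n \<le> r - 1 \<Longrightarrow> eps r s n = (-1) ^ eps_exp r s n"
  using qint_re_nonzero[of n] of_int_eps[of r s n]
  by (auto simp: eps_exp_def sgn_if split: if_splits)

lemma sgn_qint_re: "1 \<le> n \<Longrightarrow> n \<le> r - 1 \<Longrightarrow> sgn (qint_re r s n) = (-1) ^ eps_exp r s n"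
  using eps_eq_neg_one_power[of n] of_int_eps[of r s n] by simp

lemma eps_square: "1 \<le> n \<Longrightarrow> n \<le> r - 1 \<Longrightarrow> eps r s n * eps r s n = 1"
  using eps_eq_neg_one_power[of n] by (simp flip: power_add)

lemma eps_reflect: "1 \<le> n \<Longrightarrow> n \<le> r - 1 \<Longrightarrow> eps r s (r - n) = eps r s n"
  using qint_reflect[of r s n] r_ge_3 odd_s
  by (simp add: eps_def)

lemma eps_1: "eps r s 1 = 1"
  using qint_1[of r s] r_ge_3 coprime_r_s by (simp add: eps_def)

sublocale sign_exponents r "eps_exp r s"
proof
  show "3 \<le> r" by (fact r_ge_3)
  show "eps_exp r s (r - n) = eps_exp r s n" if "1 \<le> n" "n \<le> r - 1" for n
    unfolding eps_exp_def using eps_reflect[OF that] by simp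
  fix x y z :: nat
  assume xyz: "1 \<le> x" "1 \<le> y" "1 \<le> z" "x + y + z \<le> r - 1"
    and h: "even (eps_exp r s x + eps_exp r s y + eps_exp r s z + eps_exp r s (x + y + z))"
  let ?e = "eps_exp r s" and ?q = "qint_re r s"
  have s1: "sgn (?q x * ?q (x + y + z)) = (-1) ^ (?e x + ?e (x + y + z))"
    using xyz by (simp add: sgn_mult sgn_qint_re power_add)
  have s2: "sgn (?q y * ?q z) = (-1) ^ (?e y + ?e z)"
    using xyz by (simp add: sgn_mult sgn_qint_re power_add)
  have s3: "sgn (?q (x + y) * ?q (x + z)) = (-1) ^ (?e (x + y) + ?e (x + z))"
    using xyz by (simp add: sgn_mult sgn_qint_re power_add)
  have "(-1::real) ^ (?e x + ?e (x + y + z)) = (-1) ^ (?e y + ?e z)"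
    unfolding neg_one_power_eq_iff using h by presburger
  then have same: "sgn (?q x * ?q (x + y + z)) = sgn (?q y * ?q z)" using s1 s2 by simp
  have "?q x * ?q (x + y + z) \<noteq> 0" using xyz qint_re_nonzero by simp
  then have "sgn (?q (x + y) * ?q (x + z)) = sgn (?q x * ?q (x + y + z))"
    unfolding qint_re_ptolemy using same by (rule sgn_add_eq)
  then have "(-1::real) ^ (?e (x + y) + ?e (x + z)) = (-1) ^ (?e x + ?e (x + y + z))"
    using s1 s3 by simp
  then show "even (?e x + ?e (x + y) + ?e (x + z) + ?e (x + y + z))"
    unfolding neg_one_power_eq_iff by presburger
qed

lemma sgn_qfact_re: "n \<le> r - 1 \<Longrightarrow> sgn (qfact_re r s n) = (-1) ^ fexp n"
proof (induction n)
  case 0 then show ?case by (simp add: qfact_re_def)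
next
  case (Suc n)
  have "qfact_re r s (Suc n) = qfact_re r s n * qint_re r s (Suc n)"
    unfolding qfact_re_def by (simp add: prod.nat_ivl_Suc')
  then show ?case using Suc sgn_qint_re[of "Suc n"] by (simp add: sgn_mult power_add)
qed

lemma etad_eq: "k \<le> r - 2 \<Longrightarrow> etad r s k = (-1) ^ (k + eps_exp r s (Suc k))"
  unfolding etad_def using eps_eq_neg_one_power[of "Suc k"] r_ge_3 by (simp add: power_add)

lemma omega_div_etad:
  assumes "k \<le> r - 2"
  shows "omega r s i j k / etad r s k = sc i j k"
proof (cases "admissible r i j k")
  case False then show ?thesis unfolding omega_def sc_def by simp
next
  case True
  define a b c where "a = (j + k - i) div 2" and "b = (i + k - j) div 2" and "c = (i + j - k) div 2"
  have adm: "i \<le> j + k" "j \<le> i + k" "k \<le> i + j" "even (i + j + k)" "i + j + k \<le> 2 * r - 4"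
    using True unfolding admissible_def by auto
  then have "even (j + k - i)" "even (i + k - j)" "even (i + j - k)" by presburger+
  then have "2 * a = j + k - i" "2 * b = i + k - j" "2 * c = i + j - k"
    unfolding a_def b_def c_def by simp_all
  then have abc: "i = b + c" "j = a + c" "k = a + b" "a + b + c + 1 \<le> r - 1"
    using adm r_ge_3 by linarith+
  define Q where "Q = qfact_re r s"
  define T where "T = (-1) ^ (a + b + c) * Q (a + b + c + 1) * Q a * Q b * Q c
    / (Q (a + b) * Q (a + c) * Q (b + c))"
  have th: "theta r s i j k = of_real T"
    unfolding theta_def Let_def T_def Q_def a_def[symmetric] b_def[symmetric] c_def[symmetric]
      qfact_eq_of_real by simp
  define N where "N = a + b + c + fexp (Suc (a + b + c)) + fexp a + fexp b + fexp c
    + fexp (a + b) + fexp (a + c) + fexp (b + c)"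
  have "sgn T = (-1) ^ (a + b + c) * (-1) ^ fexp (Suc (a + b + c)) * (-1) ^ fexp a * (-1) ^ fexp b
      * (-1) ^ fexp c / ((-1) ^ fexp (a + b) * (-1) ^ fexp (a + c) * (-1) ^ fexp (b + c))"
    unfolding T_def Q_def using abc
    by (simp add: sgn_mult sgn_divide sgn_qfact_re minus_one_power_iff del: fexp.simps)
  also have "\<dots> = (-1) ^ N" unfolding N_def
    by (simp add: power_add field_simps del: fexp.simps)
  finally have "omega r s i j k = (-1) ^ N"
    using True th unfolding omega_def by (cases "even N") (auto simp: sgn_if split: if_splits)
  moreover have "cexp a b c = N + (k + eps_exp r s (Suc k))"
    unfolding cexp_def N_def abc by simp
  ultimately have "omega r s i j k / etad r s k = (-1) ^ cexp a b c"
    unfolding etad_eq[OF assms] by (simp add: power_add minus_one_power_iff)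
  then show ?thesis unfolding sc_def a_def[symmetric] b_def[symmetric] c_def[symmetric]
    using True by simp
qed


abbreviation e1_mult :: "(nat \<Rightarrow> rat) \<Rightarrow> nat \<Rightarrow> rat" where
  "e1_mult \<equiv> vmult r s (ebas 1)"

lemma vmult_eq_sum:
  "vmult r s x y k = (if k \<le> r - 2 then (\<Sum>i\<le>r - 2. \<Sum>j\<le>r - 2. x i * y j * sc i j k) else 0)"
proof (cases "k \<le> r - 2")
  case True
  have "omega3 r s x y (ebas k) = (\<Sum>i\<le>r - 2. \<Sum>j\<le>r - 2. x i * y j * omega r s i j k)"
    unfolding omega3_def ebas_def using True
    by (simp add: if_distrib if_distribR sum.delta cong: if_cong)
  then have "omega3 r s x y (ebas k) / etad r s k
      = (\<Sum>i\<le>r - 2. \<Sum>j\<le>r - 2. x i * y j * (omega r s i j k / etad r s k))"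
    by (simp add: sum_divide_distrib)
  then show ?thesis unfolding vmult_def using True omega_div_etad[OF True] by simp
qed (simp add: vmult_def)

lemma e1_mult_eq_sum: "e1_mult y k = (if k \<le> r - 2 then (\<Sum>j\<le>r - 2. y j * sc 1 j k) else 0)"
proof -
  have "(\<Sum>i\<le>r - 2. \<Sum>j\<le>r - 2. ebas 1 i * y j * sc i j k)
      = (\<Sum>i\<le>r - 2. if i = 1 then (\<Sum>j\<le>r - 2. y j * sc 1 j k) else 0)"
    by (rule sum.cong) (auto simp: ebas_def)
  also have "\<dots> = (\<Sum>j\<le>r - 2. y j * sc 1 j k)" using r_ge_3 by (simp add: sum.delta)
  finally show ?thesis unfolding vmult_eq_sum by simp
qed

lemma e1_mult_eq:
  "e1_mult y k = (if k \<le> r - 2 then (if k \<ge> 1 then y (k - 1) else 0)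
     - (if Suc k \<le> r - 2 then rsign (Suc k) * y (Suc k) else 0) else 0)"
  unfolding e1_mult_eq_sum using sum_sc_1_right[of k y] by simp

lemma vmult_in_Vq: "vmult r s x y \<in> Vq r"
  unfolding Vq_def vmult_def by simp

lemma ebas_in_Vq: "k \<le> r - 2 \<Longrightarrow> ebas k \<in> Vq r"
  unfolding Vq_def ebas_def by simp

lemma vmult_ebas_0:
  assumes "x \<in> Vq r"
  shows "vmult r s x (ebas 0) = x"
proof
  fix k
  show "vmult r s x (ebas 0) k = x k"
  proof (cases "k \<le> r - 2")
    case True
    have "vmult r s x (ebas 0) k = (\<Sum>i\<le>r - 2. x i * sc i 0 k)"
      unfolding vmult_eq_sum ebas_def using True
      by (simp add: if_distrib if_distribR sum.delta cong: if_cong)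
    also have "\<dots> = (\<Sum>i\<le>r - 2. if i = k then x i else 0)"
      by (rule sum.cong) (use True in \<open>auto simp: sc_unit\<close>)
    finally show ?thesis using True by simp
  qed (use assms in \<open>simp add: Vq_def vmult_eq_sum\<close>)
qed

lemma vmult_e1_mult: "vmult r s x (e1_mult y) = e1_mult (vmult r s x y)"
proof
  fix m
  show "vmult r s x (e1_mult y) m = e1_mult (vmult r s x y) m"
  proof (cases "m \<le> r - 2")
    case True
    let ?I = "{..r - 2}"
    have "vmult r s x (e1_mult y) m
        = (\<Sum>i\<in>?I. \<Sum>j\<in>?I. x i * (\<Sum>l\<in>?I. y l * sc 1 l j) * sc i j m)"
      unfolding vmult_eq_sum[of x] using True
      by (simp, intro sum.cong refl) (simp add: e1_mult_eq_sum[unfolded One_nat_def])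
    also have "\<dots> = (\<Sum>i\<in>?I. \<Sum>l\<in>?I. x i * y l * (\<Sum>j\<in>?I. sc 1 l j * sc i j m))"
      by (rule sum.cong[OF refl]) (rule sum_mult_sum_swap)
    also have "\<dots> = (\<Sum>i\<in>?I. \<Sum>l\<in>?I. x i * y l * (\<Sum>k\<in>?I. sc i l k * sc 1 k m))"
      using True by (intro sum.cong refl) (simp add: sc_mult_1_commute[unfolded One_nat_def])
    also have "\<dots> = (\<Sum>k\<in>?I. (\<Sum>i\<in>?I. \<Sum>l\<in>?I. x i * y l * sc i l k) * sc 1 k m)"
      by (rule sum_sum_mult_sum_swap)
    also have "\<dots> = e1_mult (vmult r s x y) m"
      unfolding e1_mult_eq_sum using True by (simp add: vmult_eq_sum)
    finally show ?thesis .
  qed (simp add: vmult_eq_sum)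
qed

lemma vmult_linear_right:
  "vmult r s x (\<lambda>k. a * y k + z k) = (\<lambda>k. a * vmult r s x y k + vmult r s x z k)"
  unfolding vmult_eq_sum by (auto simp: algebra_simps sum.distrib sum_distrib_left)

lemma vmult_zero_left: "vmult r s (\<lambda>_. 0) y = (\<lambda>_. 0)"
  unfolding vmult_eq_sum by auto

lemma vmult_zero_right: "vmult r s x (\<lambda>_. 0) = (\<lambda>_. 0)"
  unfolding vmult_eq_sum by auto

lemma e1_mult_sum: "e1_mult (\<lambda>k. \<Sum>i\<in>A. c i * v i k) = (\<lambda>k. \<Sum>i\<in>A. c i * e1_mult (v i) k)"
  unfolding e1_mult_eq_sum
  by (auto simp: sum_distrib_left sum_distrib_right mult.assoc sum.swap[of _ A] intro!: ext)

end

context quantum_parameters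
begin

abbreviation e1_power :: "nat \<Rightarrow> nat \<Rightarrow> rat" where
  "e1_power \<equiv> vpow r s (ebas 1)"

lemma e1_power_in_Vq: "e1_power n \<in> Vq r"
  by (cases n) (auto simp: ebas_in_Vq vmult_in_Vq)

lemma veval_eq_sum:
  assumes "degree f \<le> N"
  shows "veval r s f = (\<lambda>k. \<Sum>i\<le>N. coeff f i * e1_power i k)"
proof
  fix k
  have "(\<Sum>i\<le>N. coeff f i * e1_power i k) = (\<Sum>i\<le>degree f. coeff f i * e1_power i k)"
    by (rule sum.mono_neutral_right) (use assms in \<open>auto simp: coeff_eq_0\<close>)
  then show "veval r s f k = (\<Sum>i\<le>N. coeff f i * e1_power i k)" unfolding veval_def by simp
qed

lemma veval_in_Vq: "veval r s f \<in> Vq r"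
  using e1_power_in_Vq unfolding veval_def Vq_def by simp

lemma veval_add: "veval r s (f + g) = (\<lambda>k. veval r s f k + veval r s g k)"
proof -
  define N where "N = max (degree f) (degree g)"
  have "degree (f + g) \<le> N" "degree f \<le> N" "degree g \<le> N"
    unfolding N_def by (auto intro: degree_add_le)
  then show ?thesis by (simp add: veval_eq_sum algebra_simps sum.distrib)
qed

lemma veval_smult: "veval r s (smult c f) = (\<lambda>k. c * veval r s f k)"
  by (simp add: veval_eq_sum[of _ "degree f"] sum_distrib_left mult.assoc)

lemma veval_0: "veval r s 0 = (\<lambda>_. 0)"
  by (simp add: veval_def)

lemma veval_1: "veval r s 1 = ebas 0"
  by (simp add: veval_def)

lemma veval_pCons: "veval r s (pCons a p) = (\<lambda>k. a * ebas 0 k + e1_mult (veval r s p) k)"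
proof -
  have "veval r s (pCons a p) = (\<lambda>k. \<Sum>i\<le>Suc (degree p). coeff (pCons a p) i * e1_power i k)"
    by (rule veval_eq_sum) (simp add: degree_pCons_le)
  also have "\<dots> = (\<lambda>k. a * ebas 0 k + (\<Sum>i\<le>degree p. coeff p i * e1_mult (e1_power i) k))"
    by (simp add: sum.atMost_Suc_shift del: sum.atMost_Suc)
  also have "\<dots> = (\<lambda>k. a * ebas 0 k + e1_mult (veval r s p) k)"
    unfolding veval_eq_sum[OF order_refl] e1_mult_sum by simp
  finally show ?thesis .
qed

lemma veval_monom_1: "veval r s ([:0, 1:] * g) = e1_mult (veval r s g)"
  by (simp add: veval_pCons)

lemma veval_mult: "veval r s (f * g) = vmult r s (veval r s f) (veval r s g)"
proof (induction g rule: pCons_induct)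
  case 0
  then show ?case by (simp add: veval_0 vmult_zero_right)
next
  case (pCons a q)
  have "f * pCons a q = smult a f + pCons 0 (f * q)" by (simp add: mult_pCons_right)
  then have "veval r s (f * pCons a q) = (\<lambda>k. a * veval r s f k + e1_mult (veval r s (f * q)) k)"
    by (simp add: veval_add veval_smult veval_pCons)
  also have "\<dots> = (\<lambda>k. a * vmult r s (veval r s f) (ebas 0) k
      + vmult r s (veval r s f) (e1_mult (veval r s q)) k)"
    by (simp add: vmult_ebas_0[OF veval_in_Vq] vmult_e1_mult[unfolded One_nat_def] pCons.IH)
  also have "\<dots> = vmult r s (veval r s f) (veval r s (pCons a q))"
    by (simp add: vmult_linear_right veval_pCons)
  finally show ?case .
qed

end

lemma Ppoly_degree_coeff: "degree (Ppoly r s n) = n \<and> coeff (Ppoly r s n) n = 1"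
proof (induction r s n rule: Ppoly.induct)
  case (3 r s n)
  let ?A = "Ppoly r s (Suc n)" and ?B = "Ppoly r s n"
    and ?c = "eps r s (Suc n) * eps r s (Suc (Suc n))"
  have "?A \<noteq> 0" using 3 by (metis coeff_0 zero_neq_one)
  then have dXA: "degree ([:0, 1:] * ?A) = Suc (Suc n)" using 3 by simp
  have dB: "degree (smult ?c ?B) < Suc (Suc n)" using 3 by (simp add: degree_smult_le le_less_trans)
  have "degree (Ppoly r s (Suc (Suc n))) = Suc (Suc n)"
    using degree_add_eq_left[OF dB[folded dXA]] dXA by (simp add: add.commute)
  moreover have "coeff (Ppoly r s (Suc (Suc n))) (Suc (Suc n)) = 1"
    using 3 dB by (simp add: coeff_eq_0)
  ultimately show ?case by simp
qed simp_all

lemma degree_Ppoly: "degree (Ppoly r s n) = n"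
  and lead_coeff_Ppoly: "lead_coeff (Ppoly r s n) = 1"
  using Ppoly_degree_coeff[of r s n] by simp_all

lemma Ppoly_nonzero: "Ppoly r s n \<noteq> 0"
  using lead_coeff_Ppoly[of r s n] by auto

context quantum_parameters
begin

lemma Ppoly_bezout: "n \<le> r - 2 \<Longrightarrow> \<exists>u v. u * Ppoly r s n + v * Ppoly r s (Suc n) = 1"
proof (induction n)
  case (Suc n)
  then obtain u v where uv: "u * Ppoly r s n + v * Ppoly r s (Suc n) = 1" by auto
  define c where "c = eps r s (Suc n) * eps r s (Suc (Suc n))"
  have "c * c = 1"
    unfolding c_def using eps_square[of "Suc n"] eps_square[of "Suc (Suc n)"] Suc.prems
    by (simp add: algebra_simps)
  then have "(v - smult c ([:0, 1:] * u)) * Ppoly r s (Suc n) + smult c u * Ppoly r s (Suc (Suc n)) = 1"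
    using uv by (simp add: c_def algebra_simps)
  then show ?case by blast
qed (auto intro: exI[of _ 1])

lemma coprime_Ppoly_Suc:
  assumes "n \<le> r - 2"
  shows "coprime (Ppoly r s n) (Ppoly r s (Suc n))"
proof (rule coprimeI)
  fix d assume "d dvd Ppoly r s n" "d dvd Ppoly r s (Suc n)"
  moreover obtain u v where "u * Ppoly r s n + v * Ppoly r s (Suc n) = 1"
    using Ppoly_bezout[OF assms] by blast
  ultimately show "is_unit d" by (metis dvd_add dvd_mult)
qed

text \<open>The continued fraction is read from the bottom, so its \<open>m\<close>-th partial tail involves the
  signs \<open>\<epsilon>\<^sub>r\<^sub>-\<^sub>2\<^sub>-\<^sub>m \<epsilon>\<^sub>r\<^sub>-\<^sub>1\<^sub>-\<^sub>m\<close>; the symmetry \<open>\<epsilon>\<^sub>n = \<epsilon>\<^sub>r\<^sub>-\<^sub>n\<close> turns them into those of the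
  recurrence for \<open>P\<^sub>m\<^sub>+\<^sub>2\<close>.\<close>

lemma cfrac_eq_Fract: "m \<le> r - 2 \<Longrightarrow> cfrac r s m = Fract (Ppoly r s (Suc m)) (Ppoly r s m)"
proof (induction m)
  case (Suc m)
  define c where "c = eps r s (Suc m) * eps r s (Suc (Suc m))"
  have "eps r s (r - 2 - m) = eps r s (Suc (Suc m))" "eps r s (r - 1 - m) = eps r s (Suc m)"
    using eps_reflect[of "Suc (Suc m)"] eps_reflect[of "Suc m"] Suc.prems
    by (simp_all add: numeral_eq_Suc)
  then have "cfrac r s (Suc m) = Fract [:0, 1:] 1 + of_int c / cfrac r s m"
    by (simp add: c_def mult.commute)
  also have "\<dots> = Fract [:0, 1:] 1 + Fract [:c:] 1 / Fract (Ppoly r s (Suc m)) (Ppoly r s m)"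
    using Suc by (simp add: of_int_fract of_int_poly)
  also have "\<dots> = Fract ([:0, 1:] * Ppoly r s (Suc m) + smult c (Ppoly r s m)) (Ppoly r s (Suc m))"
    using Ppoly_nonzero by (simp add: algebra_simps)
  finally show ?case by (simp add: c_def)
qed simp

end

section \<open>The Riley polynomial\<close>

context quantum_parameters
begin

definition eps_prod :: "nat \<Rightarrow> int" where
  "eps_prod n = (\<Prod>k\<in>{1..n}. eps r s k)"

lemma eps_prod_Suc: "eps_prod (Suc n) = eps_prod n * eps r s (Suc n)"
  unfolding eps_prod_def by (simp add: prod.nat_ivl_Suc')

text \<open>Pairing \<open>\<epsilon>\<^sub>k\<close> with \<open>\<epsilon>\<^sub>r\<^sub>-\<^sub>k\<close> around the middle index \<open>h = (r - 1)/2\<close>.\<close>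

lemma eps_prod_top: "eps_prod (r - 1) = 1"
proof -
  define h where "h = (r - 1) div 2"
  have r: "r = 2 * h + 1" unfolding h_def using odd_r r_ge_3 by presburger
  have "eps_prod (h + m) = eps_prod (h - m)" if "m \<le> h" for m
    using that
  proof (induction m)
    case (Suc m)
    have h_m: "h - m = Suc (h - Suc m)" using Suc.prems by simp
    have "eps r s (Suc (h + m)) = eps r s (h - m)"
      using eps_reflect[of "h - m"] Suc.prems r by (simp add: Suc_diff_le)
    then have "eps_prod (h + Suc m) = eps_prod (h - Suc m) * (eps r s (h - m) * eps r s (h - m))"
      using Suc by (simp add: eps_prod_Suc h_m)
    then show ?case using eps_square[of "h - m"] Suc.prems r by simp
  qed simp
  moreover have "r - 1 = h + h" using r by simp
  ultimately show ?thesis by (simp add: eps_prod_def)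
qed

text \<open>Of the first row \<open>(a, b)\<close> of \<open>A\<^sub>1 \<cdots> A\<^sub>n\<close>, after substituting \<open>t = X\<^sup>2\<close>, one of
  \<open>a(X\<^sup>2)\<close> and \<open>X b(X\<^sup>2)\<close> is \<open>\<plusminus>P\<^sub>n\<close> and the other \<open>\<plusminus>P\<^sub>n\<^sub>-\<^sub>1\<close>, depending on the parity of \<open>n\<close>.\<close>

definition riley_lead :: "nat \<Rightarrow> int poly" where
  "riley_lead n = (if even n then pcompose (fst (rileyProd r s n)) [:0, 0, 1:]
     else [:0, 1:] * pcompose (fst (snd (rileyProd r s n))) [:0, 0, 1:])"

definition riley_prev :: "nat \<Rightarrow> int poly" where
  "riley_prev n = (if even n then [:0, 1:] * pcompose (fst (snd (rileyProd r s n))) [:0, 0, 1:]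
     else pcompose (fst (rileyProd r s n)) [:0, 0, 1:])"

lemma riley_lead_Suc:
  "riley_lead (Suc n) = smult (eps r s (Suc n)) ([:0, 1:] * riley_lead n) + riley_prev n"
  and riley_prev_Suc: "riley_prev (Suc n) = riley_lead n"
proof -
  obtain a b c d where abcd: "rileyProd r s n = (a, b, c, d)" by (cases "rileyProd r s n")
  have X2: "pcompose [:0, e:] [:0, 0, 1:] = smult e ([:0, 1:] * [:0, 1::int:])" for e
    by (simp add: pcompose_pCons)
  show "riley_lead (Suc n) = smult (eps r s (Suc n)) ([:0, 1:] * riley_lead n) + riley_prev n"
    "riley_prev (Suc n) = riley_lead n"
    unfolding riley_lead_def riley_prev_def using abcd
    by (auto simp: rileyA_def pcompose_add pcompose_mult pcompose_smult pcompose_pCons X2 algebra_simps)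
qed

lemma riley_lead_eq: "n \<le> r - 1 \<Longrightarrow> riley_lead n = smult (eps_prod n) (Ppoly r s n)"
proof (induction n rule: induct_nat_012)
  case 0
  show ?case by (simp add: riley_lead_def eps_prod_def pcompose_1)
next
  case 1
  show ?case
    using riley_lead_Suc[of 0] eps_1 by (simp add: riley_lead_def riley_prev_def eps_prod_def pcompose_1)
next
  case (ge2 n)
  define c where "c = eps r s (Suc n) * eps r s (Suc (Suc n))"
  have "c * c = (eps r s (Suc n) * eps r s (Suc n)) * (eps r s (Suc (Suc n)) * eps r s (Suc (Suc n)))"
    unfolding c_def by (simp add: mult_ac)
  then have cc: "c * c = 1" using eps_square ge2.prems by simp
  have "riley_lead (Suc (Suc n)) = smult (eps r s (Suc (Suc n))) ([:0, 1:] * riley_lead (Suc n))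
      + riley_lead n"
    by (simp add: riley_lead_Suc[of "Suc n"] riley_prev_Suc)
  also have "\<dots> = smult (eps r s (Suc (Suc n)) * (eps_prod n * eps r s (Suc n)))
      ([:0, 1:] * Ppoly r s (Suc n)) + smult (eps_prod n) (Ppoly r s n)"
    using ge2 by (simp add: eps_prod_Suc)
  also have "\<dots> = smult (eps_prod n * c) ([:0, 1:] * Ppoly r s (Suc n) + smult c (Ppoly r s n))"
    using cc by (simp add: smult_add_right c_def mult_ac)
  finally show ?case by (simp add: eps_prod_Suc c_def mult.assoc)
qed

lemma Ppoly_top_eq_riley: "Ppoly r s (r - 1) = pcompose (riley r s) [:0, 0, 1:]"
  using riley_lead_eq[of "r - 1"] odd_r r_ge_3
  by (simp add: riley_lead_def riley_def eps_prod_top[unfolded One_nat_def])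

end

context quantum_parameters
begin

abbreviation Prat :: "nat \<Rightarrow> rat poly" where
  "Prat k \<equiv> map_poly of_int (Ppoly r s k)"

lemma degree_Prat: "degree (Prat k) = k" and lead_coeff_Prat: "lead_coeff (Prat k) = 1"
  using Ppoly_degree_coeff[of r s k] by (simp_all add: map_poly_degree_eq coeff_map_poly)

lemma e1_mult_ebas:
  assumes "j \<le> r - 2"
  shows "e1_mult (ebas j) = (\<lambda>k. (if Suc j \<le> r - 2 then ebas (Suc j) k else 0)
    - (if j \<ge> 1 then rsign j * ebas (j - 1) k else 0))"
  unfolding e1_mult_eq using assms by (intro ext) (auto simp: ebas_def)

lemma Prat_Suc_Suc:
  "Prat (Suc (Suc k)) = [:0, 1:] * Prat (Suc k)
    + smult (of_int (eps r s (Suc k) * eps r s (Suc (Suc k)))) (Prat k)"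
  by (simp add: map_poly_of_int_add map_poly_of_int_mult map_poly_smult map_poly_pCons)

lemma veval_Prat_Suc_Suc:
  assumes "Suc (Suc k) \<le> r - 1"
  shows "veval r s (Prat (Suc (Suc k)))
    = (\<lambda>i. e1_mult (veval r s (Prat (Suc k))) i + rsign (Suc k) * veval r s (Prat k) i)"
proof -
  have "of_int (eps r s (Suc k) * eps r s (Suc (Suc k))) = rsign (Suc k)"
    unfolding rsign_def using eps_eq_neg_one_power[of "Suc k"] eps_eq_neg_one_power[of "Suc (Suc k)"]
      assms by (simp add: power_add)
  then show ?thesis by (simp only: Prat_Suc_Suc veval_add veval_smult veval_monom_1)
qed

lemma veval_Prat_pair:
  "Suc k \<le> r - 2 \<Longrightarrow> veval r s (Prat k) = ebas k \<and> veval r s (Prat (Suc k)) = ebas (Suc k)"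
proof (induction k)
  case 0
  have "veval r s (Prat 1) = e1_mult (ebas 0)"
    using veval_monom_1[of 1] by (simp add: veval_1 map_poly_pCons)
  also have "\<dots> = ebas 1" unfolding e1_mult_ebas[OF le0] using 0 by (auto simp: ebas_def)
  finally show ?case by (simp add: veval_1)
next
  case (Suc k)
  then have IH: "veval r s (Prat k) = ebas k" "veval r s (Prat (Suc k)) = ebas (Suc k)" by simp_all
  have "veval r s (Prat (Suc (Suc k))) = (\<lambda>i. e1_mult (ebas (Suc k)) i + rsign (Suc k) * ebas k i)"
    unfolding IH[symmetric] by (rule veval_Prat_Suc_Suc) (use Suc.prems in simp)
  also have "\<dots> = ebas (Suc (Suc k))"
    unfolding e1_mult_ebas[OF Suc_leD[OF Suc.prems]] using Suc.prems by (auto simp: ebas_def)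
  finally show ?case using IH by simp
qed

lemma veval_Prat: "k \<le> r - 2 \<Longrightarrow> veval r s (Prat k) = ebas k"
proof (cases "k = r - 2")
  case True
  have "Suc (r - 3) = r - 2" using r_ge_3 by simp
  with veval_Prat_pair[of "r - 3"] show ?thesis unfolding True by simp
qed (use veval_Prat_pair[of k] in auto)

lemma veval_Prat_top: "veval r s (Prat (r - 1)) = (\<lambda>_. 0)"
proof -
  have r: "r - 1 = Suc (Suc (r - 3))" "Suc (r - 3) = r - 2" using r_ge_3 by simp_all
  have "veval r s (Prat (r - 1))
      = (\<lambda>i. e1_mult (veval r s (Prat (Suc (r - 3)))) i + rsign (Suc (r - 3)) * veval r s (Prat (r - 3)) i)"
    unfolding r(1) by (rule veval_Prat_Suc_Suc) (use r_ge_3 in simp)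
  also have "\<dots> = (\<lambda>i. e1_mult (ebas (r - 2)) i + rsign (r - 2) * ebas (r - 3) i)"
    unfolding r(2) by (simp add: veval_Prat)
  also have "\<dots> = (\<lambda>_. 0)"
    unfolding e1_mult_ebas[OF order_refl] using r_ge_3 by (auto simp: ebas_def numeral_eq_Suc)
  finally show ?thesis .
qed

lemma e1_power_triangular: "n \<le> r - 2 \<Longrightarrow> (\<forall>k. n < k \<longrightarrow> e1_power n k = 0) \<and> e1_power n n = 1"
proof (induction n)
  case (Suc n)
  have "e1_power (Suc n) = e1_mult (e1_power n)" by simp
  then show ?case unfolding e1_mult_eq using Suc by auto
qed (simp add: ebas_def)

lemma veval_degree:
  assumes "degree f \<le> r - 2"
  shows "\<forall>k. degree f < k \<longrightarrow> veval r s f k = 0" and "veval r s f (degree f) = lead_coeff f"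
proof -
  show "\<forall>k. degree f < k \<longrightarrow> veval r s f k = 0"
    unfolding veval_def using e1_power_triangular assms by auto
  have "veval r s f (degree f) = lead_coeff f * e1_power (degree f) (degree f)
      + (\<Sum>i\<in>{..degree f} - {degree f}. coeff f i * e1_power i (degree f))"
    unfolding veval_def by (subst sum.remove[of _ "degree f"]) auto
  also have "(\<Sum>i\<in>{..degree f} - {degree f}. coeff f i * e1_power i (degree f)) = 0"
    using e1_power_triangular assms by (intro sum.neutral) auto
  finally show "veval r s f (degree f) = lead_coeff f" using e1_power_triangular assms by simp
qed

lemma veval_coeff_top: "degree f \<le> r - 2 \<Longrightarrow> veval r s f (r - 2) = coeff f (r - 2)"
  using veval_degree[of f] by (cases "degree f = r - 2") (auto simp: coeff_eq_0)

lemma degree_mod_Prat_top: "degree (f mod Prat (r - 1)) \<le> r - 2"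
proof -
  have "Prat (r - 1) \<noteq> 0" using lead_coeff_Prat[of "r - 1"] by auto
  then show ?thesis using degree_mod_less[of "Prat (r - 1)" f] degree_Prat[of "r - 1"] r_ge_3
    by (cases "f mod Prat (r - 1) = 0") auto
qed

lemma veval_mod_Prat_top: "veval r s (f mod Prat (r - 1)) = veval r s f"
proof -
  have "f = Prat (r - 1) * (f div Prat (r - 1)) + f mod Prat (r - 1)" by simp
  then have "veval r s f = (\<lambda>k. vmult r s (veval r s (Prat (r - 1))) (veval r s (f div Prat (r - 1))) k
      + veval r s (f mod Prat (r - 1)) k)"
    by (metis veval_add veval_mult)
  also have "\<dots> = veval r s (f mod Prat (r - 1))"
    unfolding veval_Prat_top vmult_zero_left by simp
  finally show ?thesis ..
qed

lemma veval_eq_0_iff: "veval r s f = (\<lambda>_. 0) \<longleftrightarrow> Prat (r - 1) dvd f"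
proof
  assume "veval r s f = (\<lambda>_. 0)"
  then have "lead_coeff (f mod Prat (r - 1)) = 0"
    using veval_degree(2)[OF degree_mod_Prat_top[of f]] veval_mod_Prat_top[of f] by simp
  then show "Prat (r - 1) dvd f" by (simp add: mod_eq_0_iff_dvd)
next
  assume "Prat (r - 1) dvd f"
  then show "veval r s f = (\<lambda>_. 0)"
    using veval_mod_Prat_top[of f] by (simp add: mod_eq_0_iff_dvd veval_0)
qed

lemma veval_surj:
  assumes "v \<in> Vq r"
  shows "veval r s (\<Sum>k\<le>r - 2. smult (v k) (Prat k)) = v"
proof -
  have "veval r s (\<Sum>k\<le>N. smult (v k) (Prat k)) = (\<lambda>j. \<Sum>k\<le>N. v k * ebas k j)" if "N \<le> r - 2" for N
    using that by (induction N) (simp_all add: veval_add veval_smult veval_Prat veval_pCons veval_0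
        vmult_zero_right)
  moreover have "(\<lambda>j. \<Sum>k\<le>r - 2. v k * ebas k j) = v"
    using assms unfolding Vq_def ebas_def by (auto simp: if_distrib cong: if_cong)
  ultimately show ?thesis by simp
qed

text \<open>The counit reads off the coefficient of \<open>e\<^sub>0\<close>, which the product with \<open>e\<^sub>r\<^sub>-\<^sub>2\<close> moves to
  the top coordinate \<open>r - 2\<close>, i.e. to the top coefficient of the remainder modulo \<open>P\<^sub>r\<^sub>-\<^sub>1\<close>.\<close>

lemma counit_veval: "counit r s (veval r s f) = coeff ((f * Prat (r - 2)) mod Prat (r - 1)) (r - 2)"
proof -
  have "counit r s x = x 0 * etad r s 0" for x
    unfolding counit_def eta_def by (simp add: ebas_def if_distrib if_distribR cong: if_cong)
  then have counit: "counit r s x = x 0" for x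
    using eps_1 by (simp add: etad_def)
  have "veval r s (f * Prat (r - 2)) (r - 2) = (\<Sum>i\<le>r - 2. veval r s f i * sc i (r - 2) (r - 2))"
    by (simp add: veval_mult veval_Prat vmult_eq_sum ebas_def if_distrib if_distribR cong: if_cong)
  also have "\<dots> = counit r s (veval r s f)"
    by (simp add: sc_top counit if_distrib cong: if_cong)
  finally show ?thesis
    using veval_coeff_top[OF degree_mod_Prat_top] veval_mod_Prat_top by metis
qed

lemma counit_veval_eq_sum_residues:
  "complex_of_rat (counit r s (veval r s f)) =
     (\<Sum>z\<in>{z. poly (map_poly of_int (Ppoly r s (r - 1))) z = 0}.
        residue (\<lambda>w. poly (map_poly of_rat f * map_poly of_int (Ppoly r s (r - 2))) w
                     / poly (map_poly of_int (Ppoly r s (r - 1))) w) z)"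
proof -
  define g where "g = f * Prat (r - 2)"
  define q h where "q = g div Prat (r - 1)" and "h = g mod Prat (r - 1)"
  define Pc :: "complex poly" where "Pc = map_poly of_int (Ppoly r s (r - 1))"
  define Qc Hc :: "complex poly" where "Qc = map_poly of_rat q" and "Hc = map_poly of_rat h"
  have gd: "g = Prat (r - 1) * q + h" unfolding q_def h_def by simp
  have "map_poly of_rat f * map_poly of_int (Ppoly r s (r - 2)) = map_poly (of_rat :: rat \<Rightarrow> complex) g"
    unfolding g_def by (simp add: map_poly_of_rat_mult map_poly_of_rat_of_int)
  also have "\<dots> = Pc * Qc + Hc"
    unfolding gd Pc_def Qc_def Hc_def
    by (simp add: map_poly_of_rat_mult map_poly_of_rat_add map_poly_of_rat_of_int)
  finally have g: "map_poly of_rat f * map_poly of_int (Ppoly r s (r - 2)) = Pc * Qc + Hc" .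
  have Pc: "degree Pc = r - 1" "lead_coeff Pc = 1"
    unfolding Pc_def using Ppoly_degree_coeff[of r s "r - 1"]
    by (simp_all add: map_poly_degree_eq coeff_map_poly)
  have "degree Hc < degree Pc"
    using map_poly_degree_leq[of "of_rat :: rat \<Rightarrow> complex" h] degree_mod_Prat_top[of g, folded h_def]
      r_ge_3
    unfolding Hc_def Pc by linarith
  then have "(\<Sum>z\<in>{z. poly Pc z = 0}. residue (\<lambda>w. poly (Pc * Qc + Hc) w / poly Pc w) z)
      = coeff Hc (r - 2)"
    using sum_residues_poly_quotient[OF Pc(2)] Pc(1) by (simp add: numeral_eq_Suc)
  also have "\<dots> = of_rat (counit r s (veval r s f))"
    unfolding Hc_def h_def g_def counit_veval by (simp add: coeff_map_poly)
  finally show ?thesis unfolding g Pc_def by simp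
qed

end

theorem theorem2:
  fixes r s :: nat
  assumes "r \<ge> 3" and "odd r" and "odd s" and "coprime r s" and "0 < s" and "s < r"
  shows "lead_coeff (Ppoly r s (r - 2)) = 1 \<and> lead_coeff (Ppoly r s (r - 1)) = 1
    \<and> degree (Ppoly r s (r - 2)) = r - 2 \<and> degree (Ppoly r s (r - 1)) = r - 1
    \<and> coprime (Ppoly r s (r - 2)) (Ppoly r s (r - 1))
    \<and> Fract (Ppoly r s (r - 1)) (Ppoly r s (r - 2)) = cfrac r s (r - 2)
    \<and> veval r s 1 = ebas 0
    \<and> (\<forall>f g. veval r s (f + g) = (\<lambda>k. veval r s f k + veval r s g k))
    \<and> (\<forall>c f. veval r s (smult c f) = (\<lambda>k. c * veval r s f k))
    \<and> (\<forall>f g. veval r s (f * g) = vmult r s (veval r s f) (veval r s g))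
    \<and> (\<forall>f. veval r s f \<in> Vq r)
    \<and> (\<forall>v\<in>Vq r. \<exists>f. veval r s f = v)
    \<and> (\<forall>f. veval r s f = (\<lambda>_. 0) \<longleftrightarrow> map_poly of_int (Ppoly r s (r - 1)) dvd f)
    \<and> (\<forall>f. complex_of_rat (counit r s (veval r s f)) =
          (\<Sum>z\<in>{z. poly (map_poly of_int (Ppoly r s (r - 1))) z = 0}.
             residue (\<lambda>w. poly (map_poly of_rat f * map_poly of_int (Ppoly r s (r - 2))) w
                          / poly (map_poly of_int (Ppoly r s (r - 1))) w) z))
    \<and> Ppoly r s (r - 1) = pcompose (riley r s) [:0, 0, 1:]"
proof -
  interpret quantum_parameters r s
    using assms by unfold_locales
  have "Suc (r - 2) = r - 1" using assms(1) by simp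
  then have "coprime (Ppoly r s (r - 2)) (Ppoly r s (r - 1))"
    and "Fract (Ppoly r s (r - 1)) (Ppoly r s (r - 2)) = cfrac r s (r - 2)"
    using coprime_Ppoly_Suc[of "r - 2"] cfrac_eq_Fract[of "r - 2"] by simp_all
  moreover have "\<forall>v\<in>Vq r. \<exists>f. veval r s f = v" using veval_surj by blast
  ultimately show ?thesis
    using lead_coeff_Ppoly degree_Ppoly veval_1 veval_add veval_smult veval_mult veval_in_Vq
      veval_eq_0_iff counit_veval_eq_sum_residues
    by (intro conjI Ppoly_top_eq_riley) simp_all
qed

end
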